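(* Let $K$ be an abelian group and let $\mathfrak g=\bigoplus_{i\in\mathbb Z}\mathfrak g^i$ be a differential graded Lie algebra over $\mathbb C$ with a compatible momentum grading $\mathfrak g=\bigoplus_{k\in K}\mathfrak g_k$ (see context), with homology $\mathfrak h=\bigoplus_{k\in K}\mathfrak h_k$, $\mathfrak h_k=H(\mathfrak g_k)$. Let $n\ge 2$ and let $(k_1,\dots,k_n)\in K^n$ be such that $\mathfrak h_{k_J}=0$ for every subset $J\subset\{1,\dots,n\}$ with $1<|J|<n$, where $k_J=\sum_{i\in J}k_i$. Then the restriction of the $n$-slot minimal model bracket $\{-,\dots,-\}_h$ to $$\mathfrak h_{k_1}\otimes\cdots\otimes\mathfrak h_{k_n}\to\mathfrak h_{k_1+\dots+k_n}$$ is the same for all momentum-conserving homotopies $h$ of $d$ satisfying $dhd=d$.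
   Context: A momentum grading is a decomposition $\mathfrak g=\bigoplus_{k\in K}\mathfrak g_k$ (algebraic direct sum) respecting the $\mathbb Z$-grading with $d\mathfrak g_k\subset\mathfrak g_k$ and $[\mathfrak g_{k_1},\mathfrak g_{k_2}]\subset\mathfrak g_{k_1+k_2}$. A homotopy for $d$ is an endomorphism $h$ of degree $-1$ with $h^2=0$, $hdh=h$; it is momentum conserving if $h\mathfrak g_k\subset\mathfrak g_k$ for all $k$. Given a homotopy with $dhd=d$, put $\pi=1-dh-hd$; then $\operatorname{im}\pi$ is a complement of $\operatorname{im}d$ in $\ker d$ and is canonically identified with $\mathfrak h$, giving maps $i:\mathfrak h\to\mathfrak g$, $p:\mathfrak g\to\mathfrak h$ of degree $0$ with $pi=1$, $ip=\pi$. Trees: $T_n$ is the set of trees with $n+1$ labeled leaves ($1,\dots,n$ inputs, $n+1$ output), $n-2$ unlabeled internal lines and $n-1$ internal nodes of degree 3; $P_n$ is the set of such trees with a planar embedding. For $P\in P_n$ define $m_{P,h}\in\operatorname{Hom}^{2-n}(\mathfrak h^{\otimes n},\mathfrak h)$: decorate each input leaf by $i$, the output leaf by $p$, each internal line by $h$, each node by $[\![x,y]\!]=(-1)^{|x|}[x,y]$; insert $x_j\in\mathfrak h$ at input $j$ and compose; multiply by the sign of the permutation that puts $x_1,\dots,x_n$ into the order in which the input labels of $P$ are read counterclockwise starting just left of the output, where for this permutation an even $x_j$ counts as odd and an odd one as even; finally multiply by $(-1)^{|x_{n-1}|+|x_{n-3}|+|x_{n-5}|+\cdots}$. This is independent of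 the planar embedding, giving $m_{T,h}$ for $T\in T_n$. The minimal model bracket is $\{-,\dots,-\}_h=\sum_{T\in T_n}m_{T,h}\in\operatorname{Hom}^{2-n}(\mathfrak h^{\otimes n},\mathfrak h)$. *)

theory Defs
  imports Complex_Main
begin

definition is_dirsum :: "(complex \<Rightarrow> 'v::ab_group_add \<Rightarrow> 'v) \<Rightarrow> ('i \<Rightarrow> 'v set) \<Rightarrow> bool" where
  "is_dirsum s A \<longleftrightarrow> (\<forall>i. module.subspace s (A i)) \<and>
     (\<forall>v. \<exists>!f. finite {i. f i \<noteq> 0} \<and> (\<forall>i. f i \<in> A i) \<and> v = (\<Sum>i\<in>{i. f i \<noteq> 0}. f i))"

definition dcomp :: "('i \<Rightarrow> 'v::ab_group_add set) \<Rightarrow> 'i \<Rightarrow> 'v \<Rightarrow> 'v" where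
  "dcomp A i v = (THE f. finite {i. f i \<noteq> 0} \<and> (\<forall>i. f i \<in> A i) \<and> v = (\<Sum>i\<in>{i. f i \<noteq> 0}. f i)) i"

definition sgnv :: "int \<Rightarrow> 'v::ab_group_add \<Rightarrow> 'v" where
  "sgnv d v = (if even d then v else - v)"

definition dgla :: "(complex \<Rightarrow> 'v::ab_group_add \<Rightarrow> 'v) \<Rightarrow> (int \<Rightarrow> 'v set) \<Rightarrow>
    ('v \<Rightarrow> 'v \<Rightarrow> 'v) \<Rightarrow> ('v \<Rightarrow> 'v) \<Rightarrow> bool" where
  "dgla s Gd br d \<longleftrightarrow>
     vector_space s \<and> is_dirsum s Gd \<and>
     (\<forall>x. Vector_Spaces.linear s s (br x)) \<and> (\<forall>y. Vector_Spaces.linear s s (\<lambda>x. br x y)) \<and>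
     (\<forall>a b x y. x \<in> Gd a \<longrightarrow> y \<in> Gd b \<longrightarrow> br x y \<in> Gd (a + b)) \<and>
     (\<forall>a b x y. x \<in> Gd a \<longrightarrow> y \<in> Gd b \<longrightarrow> br x y = - sgnv (a * b) (br y x)) \<and>
     (\<forall>a b c x y z. x \<in> Gd a \<longrightarrow> y \<in> Gd b \<longrightarrow> z \<in> Gd c \<longrightarrow>
        br x (br y z) = br (br x y) z + sgnv (a * b) (br y (br x z))) \<and>
     Vector_Spaces.linear s s d \<and>
     (\<forall>a x. x \<in> Gd a \<longrightarrow> d x \<in> Gd (a + 1)) \<and>
     (\<forall>x. d (d x) = 0) \<and>
     (\<forall>a x y. x \<in> Gd a \<longrightarrow> d (br x y) = br (d x) y + sgnv a (br x (d y)))"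

definition momentum_grading :: "(complex \<Rightarrow> 'v::ab_group_add \<Rightarrow> 'v) \<Rightarrow> (int \<Rightarrow> 'v set) \<Rightarrow>
    ('v \<Rightarrow> 'v \<Rightarrow> 'v) \<Rightarrow> ('v \<Rightarrow> 'v) \<Rightarrow> ('k::ab_group_add \<Rightarrow> 'v set) \<Rightarrow> bool" where
  "momentum_grading s Gd br d Gm \<longleftrightarrow>
     is_dirsum s Gm \<and>
     (\<forall>k v i. v \<in> Gm k \<longrightarrow> dcomp Gd i v \<in> Gm k) \<and>
     (\<forall>k x. x \<in> Gm k \<longrightarrow> d x \<in> Gm k) \<and>
     (\<forall>k l x y. x \<in> Gm k \<longrightarrow> y \<in> Gm l \<longrightarrow> br x y \<in> Gm (k + l))"

definition mc_homotopy :: "(complex \<Rightarrow> 'v::ab_group_add \<Rightarrow> 'v) \<Rightarrow> (int \<Rightarrow> 'v set) \<Rightarrow>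
    ('k \<Rightarrow> 'v set) \<Rightarrow> ('v \<Rightarrow> 'v) \<Rightarrow> ('v \<Rightarrow> 'v) \<Rightarrow> bool" where
  "mc_homotopy s Gd Gm d h \<longleftrightarrow>
     Vector_Spaces.linear s s h \<and>
     (\<forall>a x. x \<in> Gd a \<longrightarrow> h x \<in> Gd (a - 1)) \<and>
     (\<forall>x. h (h x) = 0) \<and> (\<forall>x. h (d (h x)) = h x) \<and>
     (\<forall>k x. x \<in> Gm k \<longrightarrow> h x \<in> Gm k)"

definition proj_pi :: "('v::ab_group_add \<Rightarrow> 'v) \<Rightarrow> ('v \<Rightarrow> 'v) \<Rightarrow> 'v \<Rightarrow> 'v" where
  "proj_pi d h x = x - d (h x) - h (d x)"

(* planar binary trees rooted at the output leaf; leaves carry input labels *)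
datatype ptree = Leaf nat | Node ptree ptree

fun leaves :: "ptree \<Rightarrow> nat list" where
  "leaves (Leaf j) = [j]"
| "leaves (Node l r) = leaves l @ leaves r"

fun is_leaf :: "ptree \<Rightarrow> bool" where
  "is_leaf (Leaf j) = True"
| "is_leaf (Node l r) = False"

definition planar_trees :: "nat \<Rightarrow> ptree set" where
  "planar_trees n = {t. distinct (leaves t) \<and> set (leaves t) = {1..n}}"

(* canonical planar embedding: at every node the subtree with the smaller
   minimal input label is on the left; these represent T_n bijectively *)
fun canonical :: "ptree \<Rightarrow> bool" where
  "canonical (Leaf j) = True"
| "canonical (Node l r) = (canonical l \<and> canonical r \<and> Min (set (leaves l)) < Min (set (leaves r)))"

definition trees :: "nat \<Rightarrow> ptree set" where
  "trees n = {t \<in> planar_trees n. canonical t}"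

(* value of the decorated tree just below its root node (before the outgoing line),
   together with its degree; x j = i(x_j), e j = degree of x_j *)
fun tval :: "('v::ab_group_add \<Rightarrow> 'v \<Rightarrow> 'v) \<Rightarrow> ('v \<Rightarrow> 'v) \<Rightarrow> (nat \<Rightarrow> 'v) \<Rightarrow> (nat \<Rightarrow> int)
    \<Rightarrow> ptree \<Rightarrow> 'v \<times> int" where
  "tval br h x e (Leaf j) = (x j, e j)"
| "tval br h x e (Node l r) =
     (case tval br h x e l of (a, da) \<Rightarrow>
      case tval br h x e r of (b, db) \<Rightarrow>
      let a' = (if is_leaf l then a else h a); da' = (if is_leaf l then da else da - 1);
          b' = (if is_leaf r then b else h b); db' = (if is_leaf r then db else db - 1)
      in (sgnv da' (br a' b'), da' + db'))"

(* Koszul sign exponent of the permutation bringing x_1..x_n into the reading order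
   of the leaves, where even elements count as odd and odd ones as even *)
definition koszul_exp :: "nat \<Rightarrow> (nat \<Rightarrow> int) \<Rightarrow> ptree \<Rightarrow> int" where
  "koszul_exp n e t = (let w = leaves t in int (card {(p, q). p < q \<and> q < length w \<and>
       w ! p > w ! q \<and> even (e (w ! p)) \<and> even (e (w ! q))}))"

definition tail_exp :: "nat \<Rightarrow> (nat \<Rightarrow> int) \<Rightarrow> int" where
  "tail_exp n e = (\<Sum>j\<in>{j. 1 \<le> j \<and> j < n \<and> odd (n - j)}. e j)"

(* the element of g whose p-image is m_{P,h}(x_1,...,x_n), inputs given by cycles z_j *)
definition m_tree :: "('v::ab_group_add \<Rightarrow> 'v \<Rightarrow> 'v) \<Rightarrow> ('v \<Rightarrow> 'v) \<Rightarrow> ('v \<Rightarrow> 'v) \<Rightarrow> nat \<Rightarrow>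
    (nat \<Rightarrow> 'v) \<Rightarrow> (nat \<Rightarrow> int) \<Rightarrow> ptree \<Rightarrow> 'v" where
  "m_tree br d h n z e t =
     sgnv (koszul_exp n e t + tail_exp n e)
       (fst (tval br h (\<lambda>j. proj_pi d h (z j)) e t))"

(* representative in g of the minimal model bracket {x_1,...,x_n}_h, x_j = [z_j];
   its class in H(g) = ker d / im d is the value p(...) *)
definition mm_bracket_rep :: "('v::ab_group_add \<Rightarrow> 'v \<Rightarrow> 'v) \<Rightarrow> ('v \<Rightarrow> 'v) \<Rightarrow> ('v \<Rightarrow> 'v) \<Rightarrow> nat \<Rightarrow>
    (nat \<Rightarrow> 'v) \<Rightarrow> (nat \<Rightarrow> int) \<Rightarrow> 'v" where
  "mm_bracket_rep br d h n z e = proj_pi d h (\<Sum>t\<in>trees n. m_tree br d h n z e t)"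

end

theory Submission
  imports Defs
begin

text \<open>For a homotopy \<open>h\<close> and a set \<open>A\<close> of input labels put \<open>H\<^bsub>{j}\<^esub> = \<pi> z\<^sub>j\<close> and, for
  \<open>|A| \<ge> 2\<close>, \<open>H\<^sub>A = h Y\<^sub>A\<close>, where \<open>Y\<^sub>A\<close> is the sum of the Koszul-signed brackets
  \<open>[H\<^sub>B, H\<^sub>C]\<close> over the splittings \<open>A = B \<union> C\<close>. Cutting every tree at its root shows that the
  minimal model bracket is the class of \<open>\<plusminus>Y\<^sub>N\<close>, \<open>N = {1..n}\<close>.

  The family \<open>H\<close> solves the Maurer--Cartan recursion \<open>d H\<^sub>A = Y\<^sub>A\<close> on the proper subsets
  \<open>A\<close> of \<open>N\<close>: by the Jacobi identity \<open>Y\<^sub>A\<close> is a cycle of momentum \<open>k\<^sub>A\<close>, hence a boundary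
  \<open>d w\<close> because \<open>\<hh>\<^bsub>k\<^sub>A\<^esub> = 0\<close>, and \<open>d h d w = d w\<close>. Moreover, any two solutions
  of the recursion are related by gauge moves, performed on the subsets \<open>J\<close> in order of
  increasing size: \<open>H\<^sub>J\<close> changes by a boundary \<open>d v\<close> (which exists by the same acyclicity)
  and every \<open>H\<^sub>A\<close> with \<open>J \<subset> A\<close> by \<open>\<plusminus>[v, H\<^bsub>A - J\<^esub>]\<close>. Such a move changes \<open>Y\<^sub>N\<close> by the
  boundary of \<open>\<plusminus>[v, H\<^bsub>N - J\<^esub>]\<close>, so \<open>Y\<^sub>N\<close>, and with it the bracket, has the same class
  for \<open>h\<close> and \<open>h'\<close>.\<close>

section \<open>Graded signs and the graded Lie structure\<close>

lemma sgnv_add_exp: "sgnv (a + b) v = sgnv a (sgnv b v)"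
  by (auto simp: sgnv_def)

lemma sgnv_uminus [simp]: "sgnv a (- v) = - sgnv a v"
  by (auto simp: sgnv_def)

lemma sgnv_add: "sgnv a (v + w) = sgnv a v + sgnv a w"
  by (auto simp: sgnv_def)

lemma sgnv_diff: "sgnv a (v - w) = sgnv a v - sgnv a w"
  by (auto simp: sgnv_def)

lemma sgnv_zero [simp]: "sgnv a 0 = 0"
  by (auto simp: sgnv_def)

lemma sgnv_sum: "sgnv a (sum f S) = (\<Sum>x\<in>S. sgnv a (f x))"
  by (auto simp: sgnv_def sum_negf)

lemma sgnv_exp_0 [simp]: "sgnv 0 v = v"
  by (simp add: sgnv_def)

lemma sgnv_sgnv [simp]: "sgnv a (sgnv a v) = v"
  by (auto simp: sgnv_def)

lemma module_hom_sgnv: "module_hom s s f \<Longrightarrow> f (sgnv a v) = sgnv a (f v)"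
  by (auto simp: sgnv_def module_hom.neg)

lemma sgnv_sum3_eq_zero_shift:
  assumes "even (a + x - b - y)" "even (a + x - c - z)" "sgnv x X + sgnv y Y + sgnv z Z = 0"
  shows "sgnv a X + sgnv b Y + sgnv c Z = (0::'a::ab_group_add)"
proof -
  have "sgnv z Z = - sgnv x X - sgnv y Y"
    using assms(3) by (simp add: eq_neg_iff_add_eq_0 algebra_simps)
  hence Z: "Z = sgnv z (- sgnv x X - sgnv y Y)"
    by (metis sgnv_sgnv)
  show ?thesis unfolding Z using assms(1,2)
    by (cases "even a"; cases "even x"; cases "even b"; cases "even y"; cases "even c"; cases "even z";
        simp add: sgnv_def even_add even_diff algebra_simps)
qed

locale dgla_space =
  fixes s :: "complex \<Rightarrow> 'v::ab_group_add \<Rightarrow> 'v" and Gd :: "int \<Rightarrow> 'v set"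
    and br :: "'v \<Rightarrow> 'v \<Rightarrow> 'v" and d :: "'v \<Rightarrow> 'v"
  assumes is_dgla: "dgla s Gd br d"
begin

lemma module: "module s"
  using is_dgla by (simp add: dgla_def vector_space_def module_def)

lemma module_hom_d: "module_hom s s d"
  using is_dgla by (simp add: dgla_def linear_iff_module_hom)

lemma module_hom_br_right: "module_hom s s (br x)"
  using is_dgla by (simp add: dgla_def linear_iff_module_hom)

lemma module_hom_br_left: "module_hom s s (\<lambda>x. br x y)"
  using is_dgla by (simp add: dgla_def linear_iff_module_hom)

lemma d_add: "d (a + b) = d a + d b"
  using module_hom_d module_hom.add by blast

lemma d_diff: "d (a - b) = d a - d b"
  using module_hom_d module_hom.diff by blast

lemma d_uminus: "d (- a) = - d a"
  using module_hom_d module_hom.neg by blast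

lemma d_zero [simp]: "d 0 = 0"
  using module_hom_d module_hom.zero by blast

lemma d_sum: "d (sum f S) = (\<Sum>x\<in>S. d (f x))"
  using module_hom_d module_hom.sum by blast

lemma d_sgnv: "d (sgnv a v) = sgnv a (d v)"
  using module_hom_d module_hom_sgnv by blast

lemma br_add_left: "br (a + b) c = br a c + br b c"
  using module_hom_br_left module_hom.add by fastforce

lemma br_add_right: "br c (a + b) = br c a + br c b"
  using module_hom_br_right module_hom.add by fastforce

lemma br_uminus_left: "br (- a) c = - br a c"
  using module_hom_br_left module_hom.neg by fastforce

lemma br_uminus_right: "br c (- a) = - br c a"
  using module_hom_br_right module_hom.neg by fastforce

lemma br_zero_left [simp]: "br 0 c = 0"
  using module_hom_br_left module_hom.zero by fastforce

lemma br_zero_right [simp]: "br c 0 = 0"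
  using module_hom_br_right module_hom.zero by fastforce

lemma br_sum_left: "br (sum f S) c = (\<Sum>x\<in>S. br (f x) c)"
  using module_hom_br_left[of c] module_hom.sum by fastforce

lemma br_sum_right: "br c (sum f S) = (\<Sum>x\<in>S. br c (f x))"
  using module_hom_br_right[of c] module_hom.sum by fastforce

lemma br_sum_sum: "br (sum f A) (sum g B) = (\<Sum>a\<in>A. \<Sum>b\<in>B. br (f a) (g b))"
  unfolding br_sum_left by (simp only: br_sum_right)

lemma br_sgnv_left: "br (sgnv a u) c = sgnv a (br u c)"
  by (auto simp: sgnv_def br_uminus_left)

lemma br_sgnv_right: "br c (sgnv a u) = sgnv a (br c u)"
  by (auto simp: sgnv_def br_uminus_right)

lemma subspace_Gd: "module.subspace s (Gd a)"
  using is_dgla by (simp add: dgla_def is_dirsum_def)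

lemma Gd_zero [simp]: "0 \<in> Gd a"
  by (rule module.subspace_0[OF module subspace_Gd])

lemma Gd_add: "x \<in> Gd a \<Longrightarrow> y \<in> Gd a \<Longrightarrow> x + y \<in> Gd a"
  by (rule module.subspace_add[OF module subspace_Gd])

lemma Gd_diff: "x \<in> Gd a \<Longrightarrow> y \<in> Gd a \<Longrightarrow> x - y \<in> Gd a"
  by (rule module.subspace_diff[OF module subspace_Gd])

lemma Gd_sum: "(\<And>x. x \<in> S \<Longrightarrow> f x \<in> Gd a) \<Longrightarrow> sum f S \<in> Gd a"
  by (rule module.subspace_sum[OF module subspace_Gd])

lemma Gd_sgnv: "x \<in> Gd a \<Longrightarrow> sgnv b x \<in> Gd a"
  by (auto simp: sgnv_def module.subspace_neg[OF module subspace_Gd])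

lemma Gd_br: "x \<in> Gd a \<Longrightarrow> y \<in> Gd b \<Longrightarrow> br x y \<in> Gd (a + b)"
  using is_dgla unfolding dgla_def by blast

lemma Gd_d: "x \<in> Gd a \<Longrightarrow> d x \<in> Gd (a + 1)"
  using is_dgla unfolding dgla_def by blast

lemma br_anticomm: "x \<in> Gd a \<Longrightarrow> y \<in> Gd b \<Longrightarrow> br x y = - sgnv (a * b) (br y x)"
  using is_dgla unfolding dgla_def by blast

lemma jacobi: "x \<in> Gd a \<Longrightarrow> y \<in> Gd b \<Longrightarrow> z \<in> Gd c \<Longrightarrow>
    br x (br y z) = br (br x y) z + sgnv (a * b) (br y (br x z))"
  using is_dgla unfolding dgla_def by blast

lemma d_d [simp]: "d (d x) = 0"
  using is_dgla unfolding dgla_def by blast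

lemma d_br: "x \<in> Gd a \<Longrightarrow> d (br x y) = br (d x) y + sgnv a (br x (d y))"
  using is_dgla unfolding dgla_def by blast

lemma range_d_diff_trans: "a - b \<in> range d \<Longrightarrow> b - c \<in> range d \<Longrightarrow> a - c \<in> range d"
  by (metis (no_types, lifting) d_add diff_add_cancel add_diff_eq rangeE rangeI)

lemma range_d_diff_sym:
  assumes "a - b \<in> range d"
  shows "b - a \<in> range d"
proof -
  obtain x where "a - b = d x"
    using assms by blast
  hence "b - a = d (- x)"
    by (metis d_uminus minus_diff_eq)
  thus ?thesis
    by blast
qed

lemma range_d_diff_sgnv: "a - b \<in> range d \<Longrightarrow> sgnv t a - sgnv t b \<in> range d"
  by (auto simp: sgnv_diff[symmetric] d_sgnv[symmetric])

lemma double_eq_zeroD: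
  fixes x :: 'v
  assumes "x + x = 0"
  shows "x = 0"
proof -
  interpret module s by (rule module)
  have "x = s (1/2) (s (1 + 1) x)"
    by (simp only: scale_scale) simp
  also have "\<dots> = 0"
    by (simp only: scale_left_distrib scale_one assms scale_zero_right)
  finally show ?thesis .
qed

lemma triple_eq_zeroD:
  fixes x :: 'v
  assumes "x + x + x = 0"
  shows "x = 0"
proof -
  interpret module s by (rule module)
  have "x = s (1/3) (s (1 + 1 + 1) x)"
    by (simp only: scale_scale) simp
  also have "\<dots> = 0"
    by (simp only: scale_left_distrib scale_one assms scale_zero_right)
  finally show ?thesis .
qed

lemma jacobi_cyclic:
  assumes "x \<in> Gd p" "y \<in> Gd q" "w \<in> Gd r"
  shows "sgnv (p * r) (br (br x y) w) + sgnv (q * p) (br (br y w) x) + sgnv (r * q) (br (br w x) y) = 0"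
proof -
  define T1 T2 T3 where "T1 = br x (br y w)" and "T2 = br y (br w x)" and "T3 = br w (br x y)"
  have "br x w = - sgnv (p * r) (br w x)"
    by (rule br_anticomm[OF assms(1,3)])
  hence jac: "T1 = br (br x y) w - sgnv (p * q) (sgnv (p * r) T2)"
    using jacobi[OF assms] unfolding T1_def T2_def by (simp add: br_uminus_right br_sgnv_right)
  have a1: "br (br x y) w = - sgnv ((p + q) * r) T3"
    unfolding T3_def by (rule br_anticomm[OF Gd_br[OF assms(1,2)] assms(3)])
  have a2: "br (br y w) x = - sgnv ((q + r) * p) T1"
    unfolding T1_def by (rule br_anticomm[OF Gd_br[OF assms(2,3)] assms(1)])
  have a3: "br (br w x) y = - sgnv ((r + p) * q) T2"
    unfolding T2_def by (rule br_anticomm[OF Gd_br[OF assms(3,1)] assms(2)])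
  show ?thesis unfolding a1 a2 a3 jac[unfolded a1]
    by (cases "even p"; cases "even q"; cases "even r"; simp add: sgnv_def)
qed

end

section \<open>Koszul signs of blocks of inputs\<close>

text \<open>\<open>crossings e A B\<close> counts the inversions between a block \<open>A\<close> of inputs read before a
  block \<open>B\<close>, where only inputs of even degree count (they are odd after the shift). \<open>tdeg e A\<close>
  is the degree of \<open>H\<^sub>A\<close>: the \<open>|A|\<close>-ary bracket has degree \<open>2 - |A|\<close> and \<open>h\<close> lowers it by
  one.\<close>

definition crossings :: "(nat \<Rightarrow> int) \<Rightarrow> nat set \<Rightarrow> nat set \<Rightarrow> int" where
  "crossings e A B = int (card {(a, b). a \<in> A \<and> b \<in> B \<and> b < a \<and> even (e a) \<and> even (e b)})"

definition tdeg :: "(nat \<Rightarrow> int) \<Rightarrow> nat set \<Rightarrow> int" where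
  "tdeg e A = (\<Sum>a\<in>A. e a) - int (card A) + 1"

definition even_count :: "(nat \<Rightarrow> int) \<Rightarrow> nat set \<Rightarrow> int" where
  "even_count e A = int (card {a\<in>A. even (e a)})"

lemma crossings_Un_left:
  assumes "finite A" "finite B" "finite C" "A \<inter> B = {}"
  shows "crossings e (A \<union> B) C = crossings e A C + crossings e B C"
proof -
  let ?S = "\<lambda>A. {(a, b). a \<in> A \<and> b \<in> C \<and> b < a \<and> even (e a) \<and> even (e b)}"
  have "finite (?S X)" if "finite X" for X
    by (rule finite_subset[of _ "X \<times> C"]) (use that assms in auto)
  moreover have "?S (A \<union> B) = ?S A \<union> ?S B" "?S A \<inter> ?S B = {}"
    using assms(4) by auto
  ultimately show ?thesis
    unfolding crossings_def using assms by (simp add: card_Un_disjoint)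
qed

lemma crossings_Un_right:
  assumes "finite A" "finite B" "finite C" "A \<inter> B = {}"
  shows "crossings e C (A \<union> B) = crossings e C A + crossings e C B"
proof -
  let ?S = "\<lambda>A. {(a, b). a \<in> C \<and> b \<in> A \<and> b < a \<and> even (e a) \<and> even (e b)}"
  have "finite (?S X)" if "finite X" for X
    by (rule finite_subset[of _ "C \<times> X"]) (use that assms in auto)
  moreover have "?S (A \<union> B) = ?S A \<union> ?S B" "?S A \<inter> ?S B = {}"
    using assms(4) by auto
  ultimately show ?thesis
    unfolding crossings_def using assms by (simp add: card_Un_disjoint)
qed

lemma crossings_swap:
  assumes "finite A" "finite B" "A \<inter> B = {}"
  shows "crossings e A B + crossings e B A = even_count e A * even_count e B"
proof -
  let ?EA = "{a\<in>A. even (e a)}" and ?EB = "{b\<in>B. even (e b)}"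
  let ?S1 = "{(a, b). a \<in> A \<and> b \<in> B \<and> b < a \<and> even (e a) \<and> even (e b)}"
  let ?S2 = "{(a, b). a \<in> B \<and> b \<in> A \<and> b < a \<and> even (e a) \<and> even (e b)}"
  let ?T = "{(a, b). a \<in> A \<and> b \<in> B \<and> a < b \<and> even (e a) \<and> even (e b)}"
  have swap: "prod.swap ` ?S2 = ?T"
    by (auto simp: image_def)
  have card_S2: "card ?S2 = card ?T"
    unfolding swap[symmetric] by (rule card_image[symmetric]) (rule inj_swap)
  have "?S1 \<union> ?T = ?EA \<times> ?EB"
  proof (intro equalityI subsetI)
    fix p assume "p \<in> ?EA \<times> ?EB"
    then obtain a b where "p = (a, b)" "a \<in> A" "b \<in> B" "even (e a)" "even (e b)"
      by blast
    moreover have "a \<noteq> b"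
      using assms(3) \<open>a \<in> A\<close> \<open>b \<in> B\<close> by blast
    ultimately show "p \<in> ?S1 \<union> ?T"
      by (cases "a < b") auto
  qed auto
  moreover have "finite ?S1" "finite ?T"
    by (rule finite_subset[of _ "A \<times> B"], use assms in auto)+
  moreover have "?S1 \<inter> ?T = {}"
    by auto
  ultimately have "card ?S1 + card ?S2 = card ?EA * card ?EB"
    unfolding card_S2 by (simp add: card_Un_disjoint[symmetric] card_cartesian_product)
  hence "int (card ?S1 + card ?S2) = int (card ?EA * card ?EB)"
    by (rule arg_cong)
  thus ?thesis
    unfolding crossings_def even_count_def by simp
qed

lemma tdeg_Un:
  assumes "finite A" "finite B" "A \<inter> B = {}"
  shows "tdeg e (A \<union> B) = tdeg e A + tdeg e B - 1"
  using assms by (simp add: tdeg_def sum.union_disjoint card_Un_disjoint)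

lemma tdeg_singleton [simp]: "tdeg e {j} = e j"
  by (simp add: tdeg_def)

lemma even_tdeg_even_count: "finite A \<Longrightarrow> even (tdeg e A + 1 + even_count e A)"
proof (induction A rule: finite_induct)
  case empty
  then show ?case by (simp add: tdeg_def even_count_def)
next
  case (insert x F)
  have "{a \<in> insert x F. even (e a)} =
      (if even (e x) then insert x {a \<in> F. even (e a)} else {a \<in> F. even (e a)})"
    by auto
  hence "even_count e (insert x F) = even_count e F + (if even (e x) then 1 else 0)"
    using insert by (simp add: even_count_def)
  moreover have "tdeg e (insert x F) = tdeg e F + e x - 1"
    using insert by (simp add: tdeg_def)
  ultimately show ?case
    using insert.IH by auto
qed

text \<open>Exchanging two blocks of inputs costs the sign of graded antisymmetry for elements of the
  shifted degrees \<open>tdeg e A + 1\<close> and \<open>tdeg e B + 1\<close>.\<close>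

lemma even_crossings_swap:
  assumes "finite A" "finite B" "A \<inter> B = {}"
  shows "even (crossings e A B + crossings e B A + (tdeg e A + 1) * (tdeg e B + 1))"
  using crossings_swap[OF assms] even_tdeg_even_count[of A e] even_tdeg_even_count[of B e] assms
  by (simp add: even_add even_mult_iff)

section \<open>Splittings of a set of inputs\<close>

definition splittings :: "nat set \<Rightarrow> (nat set \<times> nat set) set" where
  "splittings K = {(A, B). A \<union> B = K \<and> A \<inter> B = {} \<and> A \<noteq> {} \<and> B \<noteq> {}}"

definition canon_splittings :: "nat set \<Rightarrow> (nat set \<times> nat set) set" where
  "canon_splittings K = {(A, B). (A, B) \<in> splittings K \<and> Min A < Min B}"

definition triple_splittings :: "nat set \<Rightarrow> (nat set \<times> nat set \<times> nat set) set" where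
  "triple_splittings K = {(C, D, B). C \<union> D \<union> B = K \<and> C \<inter> D = {} \<and> C \<inter> B = {} \<and> D \<inter> B = {} \<and>
     C \<noteq> {} \<and> D \<noteq> {} \<and> B \<noteq> {}}"

lemma finite_splittings: "finite K \<Longrightarrow> finite (splittings K)"
  by (rule finite_subset[of _ "Pow K \<times> Pow K"]) (auto simp: splittings_def)

lemma finite_canon_splittings: "finite K \<Longrightarrow> finite (canon_splittings K)"
  by (rule finite_subset[of _ "Pow K \<times> Pow K"]) (auto simp: canon_splittings_def splittings_def)

lemma splittingsD:
  assumes "(A, B) \<in> splittings K" "finite K"
  shows "A \<subseteq> K" "B \<subseteq> K" "A \<noteq> K" "B \<noteq> K" "A \<noteq> {}" "B \<noteq> {}" "A \<inter> B = {}"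
    "finite A" "finite B" "K = A \<union> B"
  using assms by (auto simp: splittings_def dest: finite_subset)

lemma canon_splittings_subset: "canon_splittings K \<subseteq> splittings K"
  by (auto simp: canon_splittings_def)

lemma canon_splittings_psubset:
  assumes "p \<in> canon_splittings K"
  shows "fst p \<subset> K" "snd p \<subset> K"
  using assms by (auto simp: canon_splittings_def splittings_def) blast+

lemma splittings_swap: "(A, B) \<in> splittings K \<Longrightarrow> (B, A) \<in> splittings K"
  by (auto simp: splittings_def)

lemma sum_splittings_canon:
  assumes "finite K"
  shows "sum f (splittings K) = (\<Sum>p\<in>canon_splittings K. f p + f (prod.swap p))"
proof -
  have "splittings K = canon_splittings K \<union> prod.swap ` canon_splittings K"
  proof (intro equalityI subsetI)
    fix p assume p: "p \<in> splittings K"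
    obtain A B where pAB: "p = (A, B)" by force
    note D = splittingsD[OF p[unfolded pAB] assms]
    have "Min A \<noteq> Min B"
      using D(5-9) Min_in by (metis disjoint_iff)
    thus "p \<in> canon_splittings K \<union> prod.swap ` canon_splittings K"
      using p splittings_swap[of A B K] unfolding pAB canon_splittings_def by (auto simp: image_def)
  qed (auto simp: canon_splittings_def splittings_def)
  moreover have "canon_splittings K \<inter> prod.swap ` canon_splittings K = {}"
    by (auto simp: canon_splittings_def)
  moreover have "finite (canon_splittings K)"
    by (rule finite_canon_splittings[OF assms])
  ultimately have "sum f (splittings K) = sum f (canon_splittings K) + sum f (prod.swap ` canon_splittings K)"
    by (simp add: sum.union_disjoint)
  also have "sum f (prod.swap ` canon_splittings K) = sum (f \<circ> prod.swap) (canon_splittings K)"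
    by (rule sum.reindex) (rule inj_swap)
  finally show ?thesis
    by (simp add: sum.distrib)
qed

lemma splittings_singleton [simp]: "splittings {a} = {}"
proof -
  have False if "(A, B) \<in> splittings {a}" for A B
  proof -
    have "A = {a}" "B = {a}"
      using that by (auto simp: splittings_def subset_singleton_iff Un_singleton_iff)
    thus False
      using that by (simp add: splittings_def)
  qed
  thus ?thesis by auto
qed

lemma canon_splittings_singleton [simp]: "canon_splittings {a} = {}"
  by (simp add: canon_splittings_def)

definition rotate3 :: "'a \<times> 'a \<times> 'a \<Rightarrow> 'a \<times> 'a \<times> 'a" where
  "rotate3 t = (fst (snd t), snd (snd t), fst t)"

lemma sum_triple_splittings_rotate3:
  "sum g (triple_splittings K) = sum (g \<circ> rotate3) (triple_splittings K)"
  by (rule sum.reindex_bij_witness[where i = rotate3 and j = "\<lambda>t. rotate3 (rotate3 t)"])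
     (auto simp: rotate3_def triple_splittings_def)

lemma sum_splittings_nested:
  assumes "finite K"
  shows "(\<Sum>p\<in>splittings K. \<Sum>q\<in>splittings (fst p). g (fst q) (snd q) (snd p)) =
    (\<Sum>t\<in>triple_splittings K. g (fst t) (fst (snd t)) (snd (snd t)))"
proof -
  have "\<forall>p\<in>splittings K. finite (splittings (fst p))"
    using assms by (auto intro!: finite_splittings dest: splittingsD)
  hence "(\<Sum>p\<in>splittings K. \<Sum>q\<in>splittings (fst p). g (fst q) (snd q) (snd p)) =
      (\<Sum>(p, q)\<in>Sigma (splittings K) (\<lambda>p. splittings (fst p)). g (fst q) (snd q) (snd p))"
    by (rule sum.Sigma[OF finite_splittings[OF assms]])
  also have "\<dots> = (\<Sum>t\<in>triple_splittings K. g (fst t) (fst (snd t)) (snd (snd t)))"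
    by (rule sum.reindex_bij_witness[where i = "\<lambda>t. ((fst t \<union> fst (snd t), snd (snd t)), (fst t, fst (snd t)))"
         and j = "\<lambda>(p, q). (fst q, snd q, snd p)"])
       (auto simp: splittings_def triple_splittings_def)
  finally show ?thesis .
qed

lemma sum_splittings_containing:
  assumes "finite K" "J \<subseteq> K" "J \<noteq> {}" "J \<noteq> K"
    and "\<And>p. p \<in> splittings K \<Longrightarrow> \<not> J \<subseteq> fst p \<Longrightarrow> g p = 0"
  shows "sum g (splittings K) = g (J, K - J) + (\<Sum>q\<in>splittings (K - J). g (J \<union> fst q, snd q))"
proof -
  let ?L = "K - J" and ?f = "\<lambda>q. (J \<union> fst q, snd q)"
  have S: "?f ` splittings ?L \<subseteq> splittings K - {(J, ?L)}"
    using assms(2) by (auto simp: splittings_def)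
  have "g p = 0" if "p \<in> splittings K - insert (J, ?L) (?f ` splittings ?L)" for p
  proof (rule assms(5))
    show "p \<in> splittings K"
      using that by blast
    show "\<not> J \<subseteq> fst p"
    proof
      assume J: "J \<subseteq> fst p"
      note D = splittingsD[of "fst p" "snd p" K, simplified, OF _ assms(1)]
      show False
      proof (cases "fst p = J")
        case True
        thus False using that D by (auto simp: prod_eq_iff)
      next
        case False
        hence "(fst p - J, snd p) \<in> splittings ?L"
          using that J D by (auto simp: splittings_def)
        moreover have "p = ?f (fst p - J, snd p)"
          using J by (simp add: Un_absorb1)
        ultimately show False
          using that by blast
      qed
    qed
  qed
  moreover have "(J, ?L) \<in> splittings K"
    using assms(2-4) by (auto simp: splittings_def)
  ultimately have "sum g (splittings K) = sum g (insert (J, ?L) (?f ` splittings ?L))"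
    using S by (intro sum.mono_neutral_right finite_splittings assms(1)) auto
  also have "\<dots> = g (J, ?L) + sum g (?f ` splittings ?L)"
    using S finite_splittings[of ?L] assms(1) by (subst sum.insert) auto
  also have "inj_on ?f (splittings ?L)"
  proof (rule inj_onI)
    fix x y assume "x \<in> splittings ?L" "y \<in> splittings ?L" "?f x = ?f y"
    hence "fst x = (J \<union> fst x) - J" "fst y = (J \<union> fst y) - J" "J \<union> fst x = J \<union> fst y" "snd x = snd y"
      by (auto simp: splittings_def)
    thus "x = y"
      by (simp add: prod_eq_iff)
  qed
  hence "sum g (?f ` splittings ?L) = (\<Sum>q\<in>splittings ?L. g (?f q))"
    by (simp add: sum.reindex)
  finally show ?thesis .
qed

section \<open>The bracket sum\<close>

text \<open>\<open>mc_sum br e H K\<close> is the bracket sum \<open>Y\<^sub>K\<close>, each unordered splitting counted once in its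
  canonical order. In \<open>kbr\<close> the exponent \<open>tdeg e A\<close> is the sign of the node decoration
  \<open>[[x, y]] = (-1)\<^bsup>|x|\<^esup> [x, y]\<close>, and \<open>crossings e A B\<close> the Koszul sign of reading the
  inputs of \<open>A\<close> before those of \<open>B\<close>.\<close>

definition kbr :: "('v::ab_group_add \<Rightarrow> 'v \<Rightarrow> 'v) \<Rightarrow> (nat \<Rightarrow> int) \<Rightarrow> nat set \<Rightarrow> nat set \<Rightarrow> 'v \<Rightarrow> 'v \<Rightarrow> 'v" where
  "kbr br e A B u w = sgnv (crossings e A B + tdeg e A) (br u w)"

definition mc_sum :: "('v::ab_group_add \<Rightarrow> 'v \<Rightarrow> 'v) \<Rightarrow> (nat \<Rightarrow> int) \<Rightarrow> (nat set \<Rightarrow> 'v) \<Rightarrow> nat set \<Rightarrow> 'v" where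
  "mc_sum br e H K = (\<Sum>p\<in>canon_splittings K. kbr br e (fst p) (snd p) (H (fst p)) (H (snd p)))"

lemma mc_sum_cong:
  assumes "\<And>A. A \<subseteq> K \<Longrightarrow> A \<noteq> K \<Longrightarrow> A \<noteq> {} \<Longrightarrow> H A = H' A"
  shows "mc_sum br e H K = mc_sum br e H' K"
  unfolding mc_sum_def
proof (rule sum.cong)
  fix p assume "p \<in> canon_splittings K"
  hence "fst p \<subseteq> K" "snd p \<subseteq> K" "fst p \<noteq> K" "snd p \<noteq> K" "fst p \<noteq> {}" "snd p \<noteq> {}"
    by (auto simp: canon_splittings_def splittings_def) blast+
  thus "kbr br e (fst p) (snd p) (H (fst p)) (H (snd p)) = kbr br e (fst p) (snd p) (H' (fst p)) (H' (snd p))"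
    using assms by simp
qed simp

lemma mc_sum_singleton [simp]: "mc_sum br e H {a} = 0"
  unfolding mc_sum_def by simp

context dgla_space
begin

lemma kbr_add_left: "kbr br e A B (x + y) w = kbr br e A B x w + kbr br e A B y w"
  unfolding kbr_def br_add_left sgnv_add ..

lemma kbr_add_right: "kbr br e A B w (x + y) = kbr br e A B w x + kbr br e A B w y"
  unfolding kbr_def br_add_right sgnv_add ..

lemma kbr_zero_left [simp]: "kbr br e A B 0 w = 0"
  unfolding kbr_def by simp

lemma kbr_zero_right [simp]: "kbr br e A B w 0 = 0"
  unfolding kbr_def by simp

lemma kbr_commute:
  assumes "finite A" "finite B" "A \<inter> B = {}" "u \<in> Gd (tdeg e A)" "w \<in> Gd (tdeg e B)"
  shows "kbr br e A B u w = kbr br e B A w u"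
proof -
  have "br w u = - sgnv (tdeg e B * tdeg e A) (br u w)"
    by (rule br_anticomm[OF assms(5,4)])
  thus ?thesis unfolding kbr_def using even_crossings_swap[OF assms(1-3), of e]
    by (cases "even (tdeg e A)"; cases "even (tdeg e B)"; cases "even (crossings e A B)";
        cases "even (crossings e B A)"; simp add: sgnv_def even_add even_mult_iff)
qed

lemma kbr_in_Gd:
  assumes "finite A" "finite B" "A \<inter> B = {}" "u \<in> Gd (tdeg e A)" "w \<in> Gd (tdeg e B)"
  shows "kbr br e A B u w \<in> Gd (tdeg e (A \<union> B) + 1)"
  using Gd_br[OF assms(4,5)] tdeg_Un[OF assms(1-3), of e] unfolding kbr_def
  by (metis Gd_sgnv add_diff_cancel_right' diff_add_cancel)

lemma d_kbr:
  assumes "finite A" "finite B" "A \<inter> B = {}" "u \<in> Gd (tdeg e A)" "w \<in> Gd (tdeg e B)"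
  shows "d (kbr br e A B u w) = kbr br e A B (d u) w + kbr br e B A (d w) u"
proof -
  have "br u (d w) = - sgnv (tdeg e A * (tdeg e B + 1)) (br (d w) u)"
    by (rule br_anticomm[OF assms(4) Gd_d[OF assms(5)]])
  thus ?thesis unfolding kbr_def d_sgnv d_br[OF assms(4)] using even_crossings_swap[OF assms(1-3), of e]
    by (cases "even (tdeg e A)"; cases "even (tdeg e B)"; cases "even (crossings e A B)";
        cases "even (crossings e B A)"; simp add: sgnv_def even_add even_mult_iff)
qed

definition graded_family :: "(nat \<Rightarrow> int) \<Rightarrow> (nat set \<Rightarrow> 'v) \<Rightarrow> nat set \<Rightarrow> bool" where
  "graded_family e H K \<longleftrightarrow> (\<forall>A. A \<subseteq> K \<and> A \<noteq> {} \<and> A \<noteq> K \<longrightarrow> H A \<in> Gd (tdeg e A))"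

lemma graded_familyD:
  "graded_family e H K \<Longrightarrow> A \<subseteq> K \<Longrightarrow> A \<noteq> {} \<Longrightarrow> A \<noteq> K \<Longrightarrow> H A \<in> Gd (tdeg e A)"
  unfolding graded_family_def by blast

lemma graded_family_splittingsD:
  assumes "graded_family e H K" "p \<in> splittings K" "finite K"
  shows "H (fst p) \<in> Gd (tdeg e (fst p))" "H (snd p) \<in> Gd (tdeg e (snd p))"
  using assms splittingsD[of "fst p" "snd p" K] unfolding graded_family_def by auto

lemma graded_family_subset: "graded_family e H K \<Longrightarrow> A \<subseteq> K \<Longrightarrow> graded_family e H A"
  unfolding graded_family_def by auto

lemma mc_sum_in_Gd:
  assumes "finite K" "graded_family e H K"
  shows "mc_sum br e H K \<in> Gd (tdeg e K + 1)"
  unfolding mc_sum_def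
proof (rule Gd_sum)
  fix p assume "p \<in> canon_splittings K"
  hence p: "p \<in> splittings K"
    using canon_splittings_subset by blast
  note D = splittingsD[of "fst p" "snd p" K, simplified, OF p assms(1)]
  show "kbr br e (fst p) (snd p) (H (fst p)) (H (snd p)) \<in> Gd (tdeg e K + 1)"
    using kbr_in_Gd[OF D(8,9,7) graded_family_splittingsD[OF assms(2) p assms(1)]] D(10) by simp
qed

lemma mc_sum_double:
  assumes "finite K" "graded_family e H K"
  shows "mc_sum br e H K + mc_sum br e H K =
    (\<Sum>p\<in>splittings K. kbr br e (fst p) (snd p) (H (fst p)) (H (snd p)))"
  unfolding sum_splittings_canon[OF assms(1)] mc_sum_def sum.distrib[symmetric]
proof (rule sum.cong[OF refl])
  fix p assume "p \<in> canon_splittings K"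
  hence p: "p \<in> splittings K"
    using canon_splittings_subset by blast
  note D = splittingsD[of "fst p" "snd p" K, simplified, OF p assms(1)]
  show "kbr br e (fst p) (snd p) (H (fst p)) (H (snd p)) + kbr br e (fst p) (snd p) (H (fst p)) (H (snd p)) =
      kbr br e (fst p) (snd p) (H (fst p)) (H (snd p)) +
      kbr br e (fst (prod.swap p)) (snd (prod.swap p)) (H (fst (prod.swap p))) (H (snd (prod.swap p)))"
    using kbr_commute[OF D(8,9,7) graded_family_splittingsD[OF assms(2) p assms(1)]] by simp
qed

lemma kbr_cyclic:
  assumes "finite C" "finite D" "finite B" "C \<inter> D = {}" "C \<inter> B = {}" "D \<inter> B = {}"
    "H C \<in> Gd (tdeg e C)" "H D \<in> Gd (tdeg e D)" "H B \<in> Gd (tdeg e B)"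
  shows "kbr br e (C \<union> D) B (kbr br e C D (H C) (H D)) (H B)
       + kbr br e (D \<union> B) C (kbr br e D B (H D) (H B)) (H C)
       + kbr br e (B \<union> C) D (kbr br e B C (H B) (H C)) (H D) = 0"
proof -
  have r: "kbr br e (X \<union> Y) Z (kbr br e X Y (H X) (H Y)) (H Z)
     = sgnv (crossings e (X \<union> Y) Z + tdeg e (X \<union> Y) + (crossings e X Y + tdeg e X)) (br (br (H X) (H Y)) (H Z))"
    for X Y Z
    unfolding kbr_def by (simp add: br_sgnv_left sgnv_add_exp)
  have e1: "crossings e (C \<union> D) B = crossings e C B + crossings e D B"
    and e2: "crossings e (D \<union> B) C = crossings e D C + crossings e B C"
    and e3: "crossings e (B \<union> C) D = crossings e B D + crossings e C D"
    by (rule crossings_Un_left; use assms in auto)+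
  have f1: "tdeg e (C \<union> D) = tdeg e C + tdeg e D - 1"
    and f2: "tdeg e (D \<union> B) = tdeg e D + tdeg e B - 1"
    and f3: "tdeg e (B \<union> C) = tdeg e B + tdeg e C - 1"
    by (rule tdeg_Un; use assms in auto)+
  have p1: "even (crossings e C D + crossings e D C + (tdeg e C + 1) * (tdeg e D + 1))"
    and p2: "even (crossings e C B + crossings e B C + (tdeg e C + 1) * (tdeg e B + 1))"
    and p3: "even (crossings e D B + crossings e B D + (tdeg e D + 1) * (tdeg e B + 1))"
    by (rule even_crossings_swap; use assms in auto)+
  show ?thesis unfolding r
  proof (rule sgnv_sum3_eq_zero_shift[OF _ _ jacobi_cyclic[OF assms(7-9)]])
    show "even (crossings e (C \<union> D) B + tdeg e (C \<union> D) + (crossings e C D + tdeg e C) + tdeg e C * tdeg e B -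
      (crossings e (D \<union> B) C + tdeg e (D \<union> B) + (crossings e D B + tdeg e D)) - tdeg e D * tdeg e C)"
      unfolding e1 e2 e3 f1 f2 f3 using p1 p2 p3
      by (simp add: even_add even_mult_iff even_diff) argo
    show "even (crossings e (C \<union> D) B + tdeg e (C \<union> D) + (crossings e C D + tdeg e C) + tdeg e C * tdeg e B -
      (crossings e (B \<union> C) D + tdeg e (B \<union> C) + (crossings e B C + tdeg e B)) - tdeg e B * tdeg e D)"
      unfolding e1 e2 e3 f1 f2 f3 using p1 p2 p3
      by (simp add: even_add even_mult_iff even_diff) argo
  qed
qed

lemma sum_triple_splittings_kbr:
  assumes "finite K" "graded_family e H K"
  shows "(\<Sum>t\<in>triple_splittings K. kbr br e (fst t \<union> fst (snd t)) (snd (snd t))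
      (kbr br e (fst t) (fst (snd t)) (H (fst t)) (H (fst (snd t)))) (H (snd (snd t)))) = 0"
    (is "sum ?g _ = 0")
proof -
  have "sum ?g (triple_splittings K) + sum ?g (triple_splittings K) + sum ?g (triple_splittings K) =
      (\<Sum>t\<in>triple_splittings K. ?g t + ?g (rotate3 t) + ?g (rotate3 (rotate3 t)))"
    using sum_triple_splittings_rotate3[of ?g K] sum_triple_splittings_rotate3[of "?g \<circ> rotate3" K]
    by (simp add: sum.distrib)
  also have "\<dots> = 0"
  proof (rule sum.neutral, rule ballI)
    fix t assume t: "t \<in> triple_splittings K"
    obtain C D B where t_eq: "t = (C, D, B)"
      by (cases t) auto
    have T: "C \<union> D \<union> B = K" "C \<inter> D = {}" "C \<inter> B = {}" "D \<inter> B = {}" "C \<noteq> {}" "D \<noteq> {}" "B \<noteq> {}"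
      using t unfolding t_eq triple_splittings_def by auto
    have "finite C" "finite D" "finite B"
      using T(1) assms(1) by (auto dest: finite_subset)
    moreover have "H C \<in> Gd (tdeg e C)" "H D \<in> Gd (tdeg e D)" "H B \<in> Gd (tdeg e B)"
      using assms(2) T unfolding graded_family_def by auto
    ultimately show "?g t + ?g (rotate3 t) + ?g (rotate3 (rotate3 t)) = 0"
      unfolding t_eq rotate3_def using kbr_cyclic[OF _ _ _ T(2-4)] by simp
  qed
  finally show ?thesis
    by (rule triple_eq_zeroD)
qed

text \<open>\<open>2 d Y\<^sub>K\<close> is a sum over ordered triple splittings, which cancels over each cyclic
  orbit by the Jacobi identity.\<close>

lemma d_mc_sum_eq_zero:
  assumes "finite K" "graded_family e H K"
    and "\<And>A. A \<subseteq> K \<Longrightarrow> A \<noteq> {} \<Longrightarrow> A \<noteq> K \<Longrightarrow> d (H A) = mc_sum br e H A"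
  shows "d (mc_sum br e H K) = 0"
proof -
  define Q where "Q p = kbr br e (fst p) (snd p) (mc_sum br e H (fst p)) (H (snd p))" for p
  have "d (mc_sum br e H K) = (\<Sum>p\<in>canon_splittings K. Q p + Q (prod.swap p))"
    unfolding mc_sum_def d_sum
  proof (rule sum.cong[OF refl])
    fix p assume "p \<in> canon_splittings K"
    hence p: "p \<in> splittings K"
      using canon_splittings_subset by blast
    note D = splittingsD[of "fst p" "snd p" K, simplified, OF p assms(1)]
    show "d (kbr br e (fst p) (snd p) (H (fst p)) (H (snd p))) = Q p + Q (prod.swap p)"
      unfolding d_kbr[OF D(8,9,7) graded_family_splittingsD[OF assms(2) p assms(1)]] Q_def
      using assms(3)[of "fst p"] assms(3)[of "snd p"] D by simp
  qed
  also have "\<dots> = sum Q (splittings K)"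
    by (rule sum_splittings_canon[OF assms(1), symmetric])
  finally have "d (mc_sum br e H K) + d (mc_sum br e H K) = (\<Sum>p\<in>splittings K. Q p + Q p)"
    by (simp add: sum.distrib)
  also have "\<dots> = (\<Sum>p\<in>splittings K. \<Sum>q\<in>splittings (fst p).
      kbr br e (fst q \<union> snd q) (snd p) (kbr br e (fst q) (snd q) (H (fst q)) (H (snd q))) (H (snd p)))"
  proof (rule sum.cong[OF refl])
    fix p assume p: "p \<in> splittings K"
    note D = splittingsD[of "fst p" "snd p" K, simplified, OF p assms(1)]
    have "Q p + Q p = kbr br e (fst p) (snd p) (mc_sum br e H (fst p) + mc_sum br e H (fst p)) (H (snd p))"
      unfolding Q_def kbr_add_left ..
    also have "\<dots> = (\<Sum>q\<in>splittings (fst p). kbr br e (fst p) (snd p)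
        (kbr br e (fst q) (snd q) (H (fst q)) (H (snd q))) (H (snd p)))"
      unfolding mc_sum_double[OF D(8) graded_family_subset[OF assms(2) D(1)]] kbr_def br_sum_left sgnv_sum ..
    also have "\<dots> = (\<Sum>q\<in>splittings (fst p). kbr br e (fst q \<union> snd q) (snd p)
        (kbr br e (fst q) (snd q) (H (fst q)) (H (snd q))) (H (snd p)))"
      by (rule sum.cong[OF refl]) (auto simp: splittings_def)
    finally show "Q p + Q p = \<dots>" .
  qed
  also have "\<dots> = 0"
    using sum_splittings_nested[OF assms(1),
        of "\<lambda>C D B. kbr br e (C \<union> D) B (kbr br e C D (H C) (H D)) (H B)"]
      sum_triple_splittings_kbr[OF assms(1,2)]
    by simp
  finally show ?thesis
    by (rule double_eq_zeroD)
qed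

section \<open>Gauge moves\<close>

lemma mc_sum_variation:
  assumes "finite K" "graded_family e H K"
    and "\<And>A. A \<subseteq> K \<Longrightarrow> A \<noteq> K \<Longrightarrow> \<Delta> A \<in> Gd (tdeg e A)"
    and "\<And>p. p \<in> splittings K \<Longrightarrow> \<Delta> (fst p) = 0 \<or> \<Delta> (snd p) = 0"
  shows "mc_sum br e (\<lambda>A. H A + \<Delta> A) K - mc_sum br e H K =
    (\<Sum>p\<in>splittings K. kbr br e (fst p) (snd p) (\<Delta> (fst p)) (H (snd p)))"
    (is "_ = sum ?g _")
proof -
  have "mc_sum br e (\<lambda>A. H A + \<Delta> A) K - mc_sum br e H K = (\<Sum>p\<in>canon_splittings K. ?g p + ?g (prod.swap p))"
    unfolding mc_sum_def sum_subtractf[symmetric]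
  proof (rule sum.cong[OF refl])
    fix p assume "p \<in> canon_splittings K"
    hence p: "p \<in> splittings K"
      using canon_splittings_subset by blast
    note D = splittingsD[of "fst p" "snd p" K, simplified, OF p assms(1)]
    have "kbr br e (fst p) (snd p) (H (fst p)) (\<Delta> (snd p)) = ?g (prod.swap p)"
      using kbr_commute[OF D(8,9,7) graded_family_splittingsD(1)[OF assms(2) p assms(1)] assms(3)[OF D(2,4)]]
      by simp
    thus "kbr br e (fst p) (snd p) (H (fst p) + \<Delta> (fst p)) (H (snd p) + \<Delta> (snd p)) -
        kbr br e (fst p) (snd p) (H (fst p)) (H (snd p)) = ?g p + ?g (prod.swap p)"
      using assms(4)[OF p] by (auto simp: kbr_add_left kbr_add_right)
  qed
  also have "\<dots> = sum ?g (splittings K)"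
    by (rule sum_splittings_canon[OF assms(1), symmetric])
  finally show ?thesis .
qed

lemma br_mc_sum:
  assumes "v \<in> Gd c" "finite L" "graded_family e H L"
  shows "br v (mc_sum br e H L) =
    (\<Sum>q\<in>splittings L. kbr br e (fst q) (snd q) (br v (H (fst q))) (H (snd q)))"
    (is "_ = sum ?T _")
proof -
  have "br v (mc_sum br e H L) + br v (mc_sum br e H L) =
      (\<Sum>q\<in>splittings L. ?T q + ?T (prod.swap q))"
    unfolding br_add_right[symmetric] mc_sum_double[OF assms(2,3)] br_sum_right
  proof (rule sum.cong[OF refl])
    fix q assume q: "q \<in> splittings L"
    note D = splittingsD[of "fst q" "snd q" L, simplified, OF q assms(2)]
    note x = graded_family_splittingsD(1)[OF assms(3) q assms(2)]
    note y = graded_family_splittingsD(2)[OF assms(3) q assms(2)]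
    have "br v (br (H (fst q)) (H (snd q))) = br (br v (H (fst q))) (H (snd q))
        + sgnv (c * tdeg e (fst q)) (br (H (fst q)) (br v (H (snd q))))"
      by (rule jacobi[OF assms(1) x y])
    moreover have "br (H (fst q)) (br v (H (snd q))) =
        - sgnv (tdeg e (fst q) * (c + tdeg e (snd q))) (br (br v (H (snd q))) (H (fst q)))"
      by (rule br_anticomm[OF x Gd_br[OF assms(1) y]])
    ultimately show "br v (kbr br e (fst q) (snd q) (H (fst q)) (H (snd q))) = ?T q + ?T (prod.swap q)"
      unfolding kbr_def br_sgnv_right using even_crossings_swap[OF D(8,9,7), of e]
      by (cases "even (tdeg e (fst q))"; cases "even (tdeg e (snd q))"; cases "even c";
          cases "even (crossings e (fst q) (snd q))"; cases "even (crossings e (snd q) (fst q))";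
          simp add: sgnv_def even_add even_mult_iff algebra_simps)
  qed
  also have "\<dots> = sum ?T (splittings L) + sum ?T (splittings L)"
    unfolding sum.distrib
    by (metis (no_types, lifting) sum.reindex_bij_witness[of "splittings L" prod.swap prod.swap]
        splittings_swap prod.collapse swap_simp swap_swap)
  finally show ?thesis
    using double_eq_zeroD[of "br v (mc_sum br e H L) - sum ?T (splittings L)"]
    by (simp add: algebra_simps)
qed

lemma d_gauge_term:
  assumes K: "finite K" "J \<subseteq> K" "J \<noteq> {}" "J \<noteq> K" and H: "graded_family e H K"
    and v: "v \<in> Gd (tdeg e J - 1)" and dH: "d (H (K - J)) = mc_sum br e H (K - J)"
  shows "d (kbr br e J (K - J) v (H (K - J))) = kbr br e J (K - J) (d v) (H (K - J)) +
    (\<Sum>q\<in>splittings (K - J). kbr br e (J \<union> fst q) (snd q) (kbr br e J (fst q) v (H (fst q))) (H (snd q)))"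
proof -
  define L where "L = K - J"
  have L: "finite J" "finite L" "J \<inter> L = {}" "graded_family e H L"
    using K graded_family_subset[OF H] finite_subset unfolding L_def by auto
  have "d (kbr br e J L v (H L)) = kbr br e J L (d v) (H L) +
      sgnv (crossings e J L + tdeg e J) (sgnv (tdeg e J - 1) (br v (mc_sum br e H L)))"
    unfolding kbr_def d_sgnv d_br[OF v] dH[folded L_def] sgnv_add ..
  also have "sgnv (crossings e J L + tdeg e J) (sgnv (tdeg e J - 1) (br v (mc_sum br e H L))) =
      (\<Sum>q\<in>splittings L. kbr br e (J \<union> fst q) (snd q) (kbr br e J (fst q) v (H (fst q))) (H (snd q)))"
    unfolding br_mc_sum[OF v L(2,4)] sgnv_sum
  proof (rule sum.cong[OF refl])
    fix q assume q: "q \<in> splittings L"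
    note D = splittingsD[of "fst q" "snd q" L, simplified, OF q L(2)]
    have e1: "crossings e (J \<union> fst q) (snd q) = crossings e J (snd q) + crossings e (fst q) (snd q)"
      by (rule crossings_Un_left) (use L D in auto)
    have e2: "tdeg e (J \<union> fst q) = tdeg e J + tdeg e (fst q) - 1"
      by (rule tdeg_Un) (use L D in auto)
    have e3: "crossings e J L = crossings e J (fst q) + crossings e J (snd q)"
      unfolding D(10) by (rule crossings_Un_right) (use L D in auto)
    show "sgnv (crossings e J L + tdeg e J) (sgnv (tdeg e J - 1)
        (kbr br e (fst q) (snd q) (br v (H (fst q))) (H (snd q)))) =
      kbr br e (J \<union> fst q) (snd q) (kbr br e J (fst q) v (H (fst q))) (H (snd q))"
      unfolding kbr_def br_sgnv_left sgnv_add_exp[symmetric] e1 e2 e3 by (simp add: algebra_simps)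
  qed
  finally show ?thesis
    unfolding L_def .
qed

definition gauge_move :: "(nat \<Rightarrow> int) \<Rightarrow> nat set \<Rightarrow> 'v \<Rightarrow> (nat set \<Rightarrow> 'v) \<Rightarrow> nat set \<Rightarrow> 'v" where
  "gauge_move e J v H A =
     (if A = J then H A + d v else if J \<subseteq> A then H A + kbr br e J (A - J) v (H (A - J)) else H A)"

lemma gauge_move_eq_self: "\<not> J \<subseteq> A \<Longrightarrow> gauge_move e J v H A = H A"
  by (auto simp: gauge_move_def)

lemma gauge_move_diff_in_Gd:
  assumes "finite K" "graded_family e H K" "v \<in> Gd (tdeg e J - 1)" "A \<subseteq> K" "A \<noteq> K"
  shows "gauge_move e J v H A - H A \<in> Gd (tdeg e A)"
proof -
  consider (eq) "A = J" | (sup) "J \<subseteq> A" "A \<noteq> J" | (other) "\<not> J \<subseteq> A"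
    by blast
  thus ?thesis
  proof cases
    case eq
    thus ?thesis
      using Gd_d[OF assms(3)] by (simp add: gauge_move_def)
  next
    case sup
    have "finite A"
      using assms(4,1) by (rule finite_subset)
    hence "tdeg e A = tdeg e J + tdeg e (A - J) - 1"
      using tdeg_Un[of J "A - J" e] sup(1) finite_subset[OF sup(1)] by (simp add: Un_absorb1)
    moreover have "H (A - J) \<in> Gd (tdeg e (A - J))"
      by (rule graded_familyD[OF assms(2)]) (use assms(4,5) sup in auto)
    ultimately have "kbr br e J (A - J) v (H (A - J)) \<in> Gd (tdeg e A)"
      unfolding kbr_def using Gd_sgnv[OF Gd_br[OF assms(3)]] by (metis diff_add_eq)
    thus ?thesis
      using sup by (simp add: gauge_move_def)
  qed (simp add: gauge_move_eq_self)
qed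

text \<open>Only the splittings whose first block contains \<open>J\<close> see the move, and by Leibniz' rule,
  the recursion for \<open>H\<^bsub>K - J\<^esub>\<close> and the Jacobi identity their terms add up to a boundary.\<close>

lemma mc_sum_gauge_move:
  assumes K: "finite K" "J \<subseteq> K" "J \<noteq> {}" "J \<noteq> K" and H: "graded_family e H K"
    and v: "v \<in> Gd (tdeg e J - 1)" and dH: "d (H (K - J)) = mc_sum br e H (K - J)"
  shows "mc_sum br e (gauge_move e J v H) K - mc_sum br e H K = d (kbr br e J (K - J) v (H (K - J)))"
proof -
  define \<Delta> where "\<Delta> A = gauge_move e J v H A - H A" for A
  have \<Delta>_Gd: "\<Delta> A \<in> Gd (tdeg e A)" if "A \<subseteq> K" "A \<noteq> K" for A
    unfolding \<Delta>_def using gauge_move_diff_in_Gd[OF K(1) H v that] .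
  have "\<Delta> (fst p) = 0 \<or> \<Delta> (snd p) = 0" if "p \<in> splittings K" for p
  proof -
    have "\<not> J \<subseteq> fst p \<or> \<not> J \<subseteq> snd p"
      using that K(3) by (auto simp: splittings_def) blast
    thus ?thesis
      unfolding \<Delta>_def by (metis gauge_move_eq_self diff_self)
  qed
  hence "mc_sum br e (gauge_move e J v H) K - mc_sum br e H K =
      (\<Sum>p\<in>splittings K. kbr br e (fst p) (snd p) (\<Delta> (fst p)) (H (snd p)))"
    using mc_sum_variation[OF K(1) H \<Delta>_Gd] unfolding \<Delta>_def by simp
  also have "\<dots> = kbr br e J (K - J) (d v) (H (K - J)) +
      (\<Sum>q\<in>splittings (K - J). kbr br e (J \<union> fst q) (snd q) (kbr br e J (fst q) v (H (fst q))) (H (snd q)))"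
  proof (subst sum_splittings_containing[OF K])
    show "kbr br e (fst p) (snd p) (\<Delta> (fst p)) (H (snd p)) = 0"
      if "p \<in> splittings K" "\<not> J \<subseteq> fst p" for p
      using that by (simp add: \<Delta>_def gauge_move_eq_self)
    have "(J \<union> fst q) - J = fst q" "J \<union> fst q \<noteq> J" if "q \<in> splittings (K - J)" for q
      using that by (auto simp: splittings_def)
    thus "kbr br e (fst (J, K - J)) (snd (J, K - J)) (\<Delta> (fst (J, K - J))) (H (snd (J, K - J))) +
        (\<Sum>q\<in>splittings (K - J). kbr br e (fst (J \<union> fst q, snd q)) (snd (J \<union> fst q, snd q))
          (\<Delta> (fst (J \<union> fst q, snd q))) (H (snd (J \<union> fst q, snd q)))) =
        kbr br e J (K - J) (d v) (H (K - J)) + (\<Sum>q\<in>splittings (K - J).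
          kbr br e (J \<union> fst q) (snd q) (kbr br e J (fst q) v (H (fst q))) (H (snd q)))"
      by (simp add: \<Delta>_def gauge_move_def)
  qed
  also have "\<dots> = d (kbr br e J (K - J) v (H (K - J)))"
    by (rule d_gauge_term[OF K H v dH, symmetric])
  finally show ?thesis .
qed

lemma mc_sum_gauge_move_eq_self:
  assumes "\<not> J \<subseteq> K \<or> K = J"
  shows "mc_sum br e (gauge_move e J v H) K = mc_sum br e H K"
proof (rule mc_sum_cong)
  fix B assume "B \<subseteq> K" "B \<noteq> K" "B \<noteq> {}"
  hence "\<not> J \<subseteq> B"
    using assms by blast
  thus "gauge_move e J v H B = H B"
    by (rule gauge_move_eq_self)
qed

lemma gauge_move_eq_self_card:
  assumes "finite N" "A \<subseteq> N" "card A \<le> card J" "A \<noteq> J"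
  shows "gauge_move e J v H A = H A"
proof -
  have "\<not> J \<subseteq> A"
    using assms card_subset_eq[OF finite_subset[OF assms(2,1)]] card_mono[OF finite_subset[OF assms(2,1)]]
    by (metis le_antisym)
  thus ?thesis
    by (rule gauge_move_eq_self)
qed

lemma graded_family_gauge_move:
  assumes "finite N" "graded_family e H N" "v \<in> Gd (tdeg e J - 1)"
  shows "graded_family e (gauge_move e J v H) N"
  unfolding graded_family_def
proof (intro allI impI)
  fix A assume A: "A \<subseteq> N \<and> A \<noteq> {} \<and> A \<noteq> N"
  have "gauge_move e J v H A = H A + (gauge_move e J v H A - H A)"
    by simp
  thus "gauge_move e J v H A \<in> Gd (tdeg e A)"
    using Gd_add[OF graded_familyD[OF assms(2)] gauge_move_diff_in_Gd[OF assms]] A by simp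
qed

end

section \<open>Solutions of the Maurer--Cartan recursion\<close>

definition momentum :: "(nat \<Rightarrow> 'k::ab_group_add) \<Rightarrow> nat set \<Rightarrow> 'k" where
  "momentum kk A = (\<Sum>i\<in>A. kk i)"

lemma momentum_singleton [simp]: "momentum kk {j} = kk j"
  by (simp add: momentum_def)

lemma momentum_Un: "finite A \<Longrightarrow> finite B \<Longrightarrow> A \<inter> B = {} \<Longrightarrow> momentum kk (A \<union> B) = momentum kk A + momentum kk B"
  unfolding momentum_def by (rule sum.union_disjoint)

definition agree_below :: "nat set \<Rightarrow> nat \<Rightarrow> (nat set \<Rightarrow> 'v) \<Rightarrow> (nat set \<Rightarrow> 'v) \<Rightarrow> bool" where
  "agree_below N m H H' \<longleftrightarrow> (\<forall>A. A \<subseteq> N \<and> A \<noteq> {} \<and> A \<noteq> N \<and> card A < m \<longrightarrow> H A = H' A)"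

locale momentum_dgla = dgla_space s Gd br d
  for s :: "complex \<Rightarrow> 'v::ab_group_add \<Rightarrow> 'v" and Gd br d +
  fixes Gm :: "'k::ab_group_add \<Rightarrow> 'v set"
  assumes is_momentum_grading: "momentum_grading s Gd br d Gm"
begin

lemma subspace_Gm: "module.subspace s (Gm k)"
  using is_momentum_grading by (simp add: momentum_grading_def is_dirsum_def)

lemma Gm_zero [simp]: "0 \<in> Gm k"
  by (rule module.subspace_0[OF module subspace_Gm])

lemma Gm_add: "x \<in> Gm k \<Longrightarrow> y \<in> Gm k \<Longrightarrow> x + y \<in> Gm k"
  by (rule module.subspace_add[OF module subspace_Gm])

lemma Gm_diff: "x \<in> Gm k \<Longrightarrow> y \<in> Gm k \<Longrightarrow> x - y \<in> Gm k"
  by (rule module.subspace_diff[OF module subspace_Gm])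

lemma Gm_sum: "(\<And>x. x \<in> S \<Longrightarrow> f x \<in> Gm k) \<Longrightarrow> sum f S \<in> Gm k"
  by (rule module.subspace_sum[OF module subspace_Gm])

lemma Gm_sgnv: "x \<in> Gm k \<Longrightarrow> sgnv a x \<in> Gm k"
  by (auto simp: sgnv_def module.subspace_neg[OF module subspace_Gm])

lemma Gm_d: "x \<in> Gm k \<Longrightarrow> d x \<in> Gm k"
  using is_momentum_grading by (simp add: momentum_grading_def)

lemma Gm_br: "x \<in> Gm k \<Longrightarrow> y \<in> Gm l \<Longrightarrow> br x y \<in> Gm (k + l)"
  using is_momentum_grading by (simp add: momentum_grading_def)

lemma kbr_in_Gm:
  assumes "finite A" "finite B" "A \<inter> B = {}" "u \<in> Gm (momentum kk A)" "w \<in> Gm (momentum kk B)"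
  shows "kbr br e A B u w \<in> Gm (momentum kk (A \<union> B))"
  unfolding kbr_def momentum_Un[OF assms(1-3)] by (intro Gm_sgnv Gm_br assms(4,5))

definition momentum_family :: "(nat \<Rightarrow> 'k) \<Rightarrow> (nat set \<Rightarrow> 'v) \<Rightarrow> nat set \<Rightarrow> bool" where
  "momentum_family kk H K \<longleftrightarrow> (\<forall>A. A \<subseteq> K \<and> A \<noteq> {} \<and> A \<noteq> K \<longrightarrow> H A \<in> Gm (momentum kk A))"

lemma momentum_familyD:
  "momentum_family kk H K \<Longrightarrow> A \<subseteq> K \<Longrightarrow> A \<noteq> {} \<Longrightarrow> A \<noteq> K \<Longrightarrow> H A \<in> Gm (momentum kk A)"
  unfolding momentum_family_def by blast

lemma mc_sum_in_Gm:
  assumes "finite K" "momentum_family kk H K"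
  shows "mc_sum br e H K \<in> Gm (momentum kk K)"
  unfolding mc_sum_def
proof (rule Gm_sum)
  fix p assume "p \<in> canon_splittings K"
  hence p: "p \<in> splittings K"
    using canon_splittings_subset by blast
  note D = splittingsD[of "fst p" "snd p" K, simplified, OF p assms(1)]
  show "kbr br e (fst p) (snd p) (H (fst p)) (H (snd p)) \<in> Gm (momentum kk K)"
    using kbr_in_Gm[OF D(8,9,7) momentum_familyD[OF assms(2)] momentum_familyD[OF assms(2)]] D by simp
qed

lemma gauge_move_diff_in_Gm:
  assumes "finite K" "momentum_family kk H K" "v \<in> Gm (momentum kk J)" "A \<subseteq> K" "A \<noteq> K"
  shows "gauge_move e J v H A - H A \<in> Gm (momentum kk A)"
proof -
  consider (eq) "A = J" | (sup) "J \<subseteq> A" "A \<noteq> J" | (other) "\<not> J \<subseteq> A"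
    by blast
  thus ?thesis
  proof cases
    case eq
    thus ?thesis
      using Gm_d[OF assms(3)] by (simp add: gauge_move_def)
  next
    case sup
    have "finite A"
      using assms(4,1) by (rule finite_subset)
    moreover have "H (A - J) \<in> Gm (momentum kk (A - J))"
      by (rule momentum_familyD[OF assms(2)]) (use assms(4,5) sup in auto)
    ultimately have "kbr br e J (A - J) v (H (A - J)) \<in> Gm (momentum kk (J \<union> (A - J)))"
      using finite_subset[OF sup(1)] by (intro kbr_in_Gm assms(3)) auto
    thus ?thesis
      using sup by (simp add: gauge_move_def Un_absorb1)
  qed (simp add: gauge_move_eq_self)
qed

lemma momentum_family_gauge_move:
  assumes "finite N" "momentum_family kk H N" "v \<in> Gm (momentum kk J)"
  shows "momentum_family kk (gauge_move e J v H) N"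
  unfolding momentum_family_def
proof (intro allI impI)
  fix A assume A: "A \<subseteq> N \<and> A \<noteq> {} \<and> A \<noteq> N"
  have "gauge_move e J v H A = H A + (gauge_move e J v H A - H A)"
    by simp
  thus "gauge_move e J v H A \<in> Gm (momentum kk A)"
    using Gm_add[OF momentum_familyD[OF assms(2)] gauge_move_diff_in_Gm[OF assms]] A by simp
qed

definition mc_solution :: "nat set \<Rightarrow> (nat \<Rightarrow> int) \<Rightarrow> (nat \<Rightarrow> 'k) \<Rightarrow> (nat \<Rightarrow> 'v) \<Rightarrow> (nat set \<Rightarrow> 'v) \<Rightarrow> bool" where
  "mc_solution N e kk z H \<longleftrightarrow> graded_family e H N \<and> momentum_family kk H N \<and>
     (\<forall>A. A \<subseteq> N \<and> A \<noteq> {} \<and> A \<noteq> N \<longrightarrow> d (H A) = mc_sum br e H A) \<and>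
     (\<forall>j\<in>N. {j} \<noteq> N \<longrightarrow> (\<exists>u. u \<in> Gd (e j - 1) \<and> u \<in> Gm (kk j) \<and> H {j} = z j - d u))"

lemma mc_solution_d:
  "mc_solution N e kk z H \<Longrightarrow> A \<subseteq> N \<Longrightarrow> A \<noteq> {} \<Longrightarrow> A \<noteq> N \<Longrightarrow> d (H A) = mc_sum br e H A"
  by (simp add: mc_solution_def)

lemma mc_solution_singleton:
  "mc_solution N e kk z H \<Longrightarrow> j \<in> N \<Longrightarrow> {j} \<noteq> N \<Longrightarrow>
    \<exists>u. u \<in> Gd (e j - 1) \<and> u \<in> Gm (kk j) \<and> H {j} = z j - d u"
  by (simp add: mc_solution_def)

lemma gauge_move_singleton:
  assumes "J \<noteq> {}" "v \<in> Gd (tdeg e J - 1)" "v \<in> Gm (momentum kk J)"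
    and u: "u \<in> Gd (e j - 1)" "u \<in> Gm (kk j)" "H {j} = z j - d u"
  shows "\<exists>u'. u' \<in> Gd (e j - 1) \<and> u' \<in> Gm (kk j) \<and> gauge_move e J v H {j} = z j - d u'"
proof (cases "J = {j}")
  case True
  hence "v \<in> Gd (e j - 1)" "v \<in> Gm (kk j)" "gauge_move e J v H {j} = z j - d (u - v)"
    using assms(2,3) u(3) by (simp_all add: gauge_move_def d_diff algebra_simps)
  thus ?thesis
    using Gd_diff[OF u(1)] Gm_diff[OF u(2)] by blast
next
  case False
  hence "\<not> J \<subseteq> {j}"
    using assms(1) by (simp add: subset_singleton_iff)
  thus ?thesis
    using u gauge_move_eq_self[of J "{j}"] by auto
qed

lemma mc_solution_gauge_move:
  assumes N: "finite N" and H: "mc_solution N e kk z H" and J: "J \<subseteq> N" "J \<noteq> {}" "J \<noteq> N"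
    and v: "v \<in> Gd (tdeg e J - 1)" "v \<in> Gm (momentum kk J)"
  shows "mc_solution N e kk z (gauge_move e J v H)"
    and "mc_sum br e (gauge_move e J v H) N - mc_sum br e H N \<in> range d"
proof -
  define H' where "H' = gauge_move e J v H"
  have HN: "graded_family e H N" "momentum_family kk H N"
    using H unfolding mc_solution_def by blast+
  have mc_sum_H': "mc_sum br e H' K - mc_sum br e H K = d (kbr br e J (K - J) v (H (K - J)))"
    if "K \<subseteq> N" "J \<subseteq> K" "K \<noteq> J" for K
    unfolding H'_def
  proof (rule mc_sum_gauge_move)
    show "finite K"
      using finite_subset[OF that(1) N] .
    show "graded_family e H K"
      using graded_family_subset[OF HN(1) that(1)] .
    show "d (H (K - J)) = mc_sum br e H (K - J)"
      using mc_solution_d[OF H, of "K - J"] that J by auto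
  qed (use that J v in auto)
  have "d (H' A) = mc_sum br e H' A" if A: "A \<subseteq> N" "A \<noteq> {}" "A \<noteq> N" for A
  proof (cases "J \<subseteq> A \<and> A \<noteq> J")
    case True
    hence "d (H' A) = d (H A) + d (kbr br e J (A - J) v (H (A - J)))"
      by (simp add: H'_def gauge_move_def d_add)
    also have "\<dots> = mc_sum br e H A + (mc_sum br e H' A - mc_sum br e H A)"
      using mc_solution_d[OF H A] mc_sum_H'[OF A(1)] True by simp
    finally show ?thesis
      by simp
  next
    case False
    hence "H' A = H A \<or> H' A = H A + d v"
      unfolding H'_def gauge_move_def by auto
    hence "d (H' A) = d (H A)"
      by (auto simp: d_add)
    moreover have "mc_sum br e H' A = mc_sum br e H A"
      unfolding H'_def using False by (intro mc_sum_gauge_move_eq_self) blast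
    ultimately show ?thesis
      using mc_solution_d[OF H A] by simp
  qed
  moreover have "\<exists>u. u \<in> Gd (e j - 1) \<and> u \<in> Gm (kk j) \<and> H' {j} = z j - d u"
    if "j \<in> N" "{j} \<noteq> N" for j
    using mc_solution_singleton[OF H that] gauge_move_singleton[OF J(2) v] unfolding H'_def by blast
  ultimately have "mc_solution N e kk z H'"
    using graded_family_gauge_move[OF N HN(1) v(1)] momentum_family_gauge_move[OF N HN(2) v(2)]
    unfolding mc_solution_def H'_def by blast
  thus "mc_solution N e kk z (gauge_move e J v H)"
    unfolding H'_def .
  show "mc_sum br e (gauge_move e J v H) N - mc_sum br e H N \<in> range d"
    using mc_sum_H'[of N] J unfolding H'_def by auto
qed

lemma mc_solution_gauge_fix:
  assumes N: "finite N" and H: "mc_solution N e kk z H" and H2: "mc_solution N e kk z H2"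
    and acyclic: "\<And>J c. J \<subseteq> N \<Longrightarrow> 1 < card J \<Longrightarrow> card J < card N \<Longrightarrow>
      c \<in> Gd (tdeg e J) \<Longrightarrow> c \<in> Gm (momentum kk J) \<Longrightarrow> d c = 0 \<Longrightarrow>
      \<exists>v. v \<in> Gd (tdeg e J - 1) \<and> v \<in> Gm (momentum kk J) \<and> d v = c"
    and J: "J \<subseteq> N" "J \<noteq> {}" "J \<noteq> N" and agree: "agree_below N (card J) H H2"
  obtains v where "v \<in> Gd (tdeg e J - 1)" "v \<in> Gm (momentum kk J)" "d v = H2 J - H J"
proof (cases "card J = 1")
  case True
  then obtain j where j: "J = {j}"
    by (rule card_1_singletonE)
  obtain u1 where u1: "u1 \<in> Gd (e j - 1)" "u1 \<in> Gm (kk j)" "H J = z j - d u1"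
    using mc_solution_singleton[OF H] J j by blast
  obtain u2 where u2: "u2 \<in> Gd (e j - 1)" "u2 \<in> Gm (kk j)" "H2 J = z j - d u2"
    using mc_solution_singleton[OF H2] J j by blast
  have "d (u1 - u2) = H2 J - H J"
    using u1(3) u2(3) by (simp add: d_diff)
  thus ?thesis
    using that[of "u1 - u2"] Gd_diff[OF u1(1) u2(1)] Gm_diff[OF u1(2) u2(2)] j by simp
next
  case False
  have "finite J"
    using J(1) N by (rule finite_subset)
  hence "card J \<noteq> 0"
    using J(2) by simp
  moreover have "J \<subset> N"
    using J by blast
  ultimately have card_J: "1 < card J" "card J < card N"
    using False psubset_card_mono[OF N, of J] by auto
  have "H2 J - H J \<in> Gd (tdeg e J)" "H2 J - H J \<in> Gm (momentum kk J)"
    using H H2 J unfolding mc_solution_def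
    by (auto intro!: Gd_diff Gm_diff graded_familyD momentum_familyD)
  moreover have "mc_sum br e H2 J = mc_sum br e H J"
  proof (rule mc_sum_cong)
    fix A assume A: "A \<subseteq> J" "A \<noteq> J" "A \<noteq> {}"
    hence "A \<subseteq> N" "A \<noteq> N" "card A < card J"
      using J psubset_card_mono[OF \<open>finite J\<close>, of A] by auto
    thus "H2 A = H A"
      using agree A(3) unfolding agree_below_def by auto
  qed
  hence "d (H2 J - H J) = 0"
    using mc_solution_d[OF H J] mc_solution_d[OF H2 J] by (simp add: d_diff)
  ultimately show ?thesis
    using acyclic[OF J(1) card_J] that by blast
qed

text \<open>A gauge move at \<open>J\<close> only changes \<open>H\<close> on supersets of \<open>J\<close>, so it spoils neither smaller
  sets nor the other sets of size \<open>m\<close>.\<close>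

lemma mc_solution_fix_level:
  assumes N: "finite N" and H2: "mc_solution N e kk z H2"
    and acyclic: "\<And>J c. J \<subseteq> N \<Longrightarrow> 1 < card J \<Longrightarrow> card J < card N \<Longrightarrow>
      c \<in> Gd (tdeg e J) \<Longrightarrow> c \<in> Gm (momentum kk J) \<Longrightarrow> d c = 0 \<Longrightarrow>
      \<exists>v. v \<in> Gd (tdeg e J - 1) \<and> v \<in> Gm (momentum kk J) \<and> d v = c"
    and S: "finite S" "\<And>J. J \<in> S \<Longrightarrow> J \<subseteq> N \<and> J \<noteq> {} \<and> J \<noteq> N \<and> card J = m"
    and H: "mc_solution N e kk z H" "agree_below N m H H2"
    and agree_S: "\<And>A. A \<subseteq> N \<Longrightarrow> A \<noteq> {} \<Longrightarrow> A \<noteq> N \<Longrightarrow> card A = m \<Longrightarrow> A \<notin> S \<Longrightarrow> H A = H2 A"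
  shows "\<exists>H'. mc_solution N e kk z H' \<and> agree_below N (Suc m) H' H2 \<and>
    mc_sum br e H' N - mc_sum br e H N \<in> range d"
  using S H agree_S
proof (induction S arbitrary: H rule: finite_induct)
  case empty
  have "agree_below N (Suc m) H H2"
    using empty.prems(3,4) unfolding agree_below_def by (auto simp: less_Suc_eq)
  moreover have "mc_sum br e H N - mc_sum br e H N = d 0"
    by simp
  ultimately show ?case
    using empty.prems(2) by blast
next
  case (insert J S)
  have J: "J \<subseteq> N" "J \<noteq> {}" "J \<noteq> N" "card J = m"
    using insert.prems(1) by auto
  obtain v where v: "v \<in> Gd (tdeg e J - 1)" "v \<in> Gm (momentum kk J)" "d v = H2 J - H J"
    using mc_solution_gauge_fix[OF N insert.prems(2) H2 acyclic J(1-3)] insert.prems(3) J(4) by blast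
  define H1 where "H1 = gauge_move e J v H"
  note move = mc_solution_gauge_move[OF N insert.prems(2) J(1-3) v(1,2), folded H1_def]
  have H1_eq: "H1 A = H A" if "A \<subseteq> N" "card A \<le> m" "A \<noteq> J" for A
    unfolding H1_def using gauge_move_eq_self_card[OF N that(1) _ that(3)] that(2) J(4) by simp
  have agree_H1: "agree_below N m H1 H2"
    unfolding agree_below_def
  proof (intro allI impI)
    fix A assume A: "A \<subseteq> N \<and> A \<noteq> {} \<and> A \<noteq> N \<and> card A < m"
    hence "H1 A = H A"
      using J(4) by (intro H1_eq) auto
    thus "H1 A = H2 A"
      using insert.prems(3) A unfolding agree_below_def by auto
  qed
  have agree_S_H1: "H1 A = H2 A"
    if "A \<subseteq> N" "A \<noteq> {}" "A \<noteq> N" "card A = m" "A \<notin> S" for A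
  proof (cases "A = J")
    case True
    thus ?thesis
      using v(3) by (simp add: H1_def gauge_move_def)
  next
    case False
    hence "H1 A = H A"
      using that by (intro H1_eq) auto
    thus ?thesis
      using insert.prems(4)[OF that(1-4)] that(5) False by simp
  qed
  have level: "J' \<subseteq> N \<and> J' \<noteq> {} \<and> J' \<noteq> N \<and> card J' = m" if "J' \<in> S" for J'
    using insert.prems(1)[of J'] that by simp
  obtain H' where H': "mc_solution N e kk z H'" "agree_below N (Suc m) H' H2"
      "mc_sum br e H' N - mc_sum br e H1 N \<in> range d"
    using insert.IH[OF level move(1) agree_H1 agree_S_H1] by blast
  show ?case
    using H'(1,2) range_d_diff_trans[OF H'(3) move(2)] by (intro exI[of _ H'] conjI)
qed

text \<open>Downward induction on the size below which the solutions agree: once they agree on all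
  proper subsets, the bracket sums coincide.\<close>

lemma mc_solutions_mc_sum_homologous:
  assumes N: "finite N" and H1: "mc_solution N e kk z H1" and H2: "mc_solution N e kk z H2"
    and acyclic: "\<And>J c. J \<subseteq> N \<Longrightarrow> 1 < card J \<Longrightarrow> card J < card N \<Longrightarrow>
      c \<in> Gd (tdeg e J) \<Longrightarrow> c \<in> Gm (momentum kk J) \<Longrightarrow> d c = 0 \<Longrightarrow>
      \<exists>v. v \<in> Gd (tdeg e J - 1) \<and> v \<in> Gm (momentum kk J) \<and> d v = c"
  shows "mc_sum br e H1 N - mc_sum br e H2 N \<in> range d"
proof -
  define P where "P m \<longleftrightarrow> (\<forall>H. mc_solution N e kk z H \<and> agree_below N m H H2 \<longrightarrow>
    mc_sum br e H N - mc_sum br e H2 N \<in> range d)" for m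
  have "P (card N)"
    unfolding P_def
  proof (intro allI impI)
    fix H assume "mc_solution N e kk z H \<and> agree_below N (card N) H H2"
    hence "mc_sum br e H N = mc_sum br e H2 N"
      unfolding agree_below_def by (intro mc_sum_cong) (auto intro: psubset_card_mono[OF N])
    thus "mc_sum br e H N - mc_sum br e H2 N \<in> range d"
      by (metis diff_self d_zero rangeI)
  qed
  moreover have "P m" if "P (Suc m)" for m
    unfolding P_def
  proof (intro allI impI)
    fix H assume H: "mc_solution N e kk z H \<and> agree_below N m H H2"
    let ?S = "{A. A \<subseteq> N \<and> A \<noteq> {} \<and> A \<noteq> N \<and> card A = m}"
    have fin: "finite ?S"
      using N by (auto intro: finite_subset[of _ "Pow N"])
    have level: "J \<subseteq> N \<and> J \<noteq> {} \<and> J \<noteq> N \<and> card J = m" if "J \<in> ?S" for J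
      using that by blast
    have rest: "H A = H2 A" if "A \<subseteq> N" "A \<noteq> {}" "A \<noteq> N" "card A = m" "A \<notin> ?S" for A
      using that by blast
    obtain H' where H': "mc_solution N e kk z H'" "agree_below N (Suc m) H' H2"
        "mc_sum br e H' N - mc_sum br e H N \<in> range d"
      using mc_solution_fix_level[OF N H2 acyclic fin level conjunct1[OF H] conjunct2[OF H] rest] by blast
    have "mc_sum br e H' N - mc_sum br e H2 N \<in> range d"
      using that H'(1,2) unfolding P_def by blast
    thus "mc_sum br e H N - mc_sum br e H2 N \<in> range d"
      by (rule range_d_diff_trans[OF range_d_diff_sym[OF H'(3)]])
  qed
  ultimately have "P 0"
    using inc_induct[of 0 "card N" P] by blast
  thus ?thesis
    using H1 unfolding P_def agree_below_def by blast
qed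

end

section \<open>Trees with canonical planar embedding\<close>

definition ctrees :: "nat set \<Rightarrow> ptree set" where
  "ctrees K = {t. distinct (leaves t) \<and> set (leaves t) = K \<and> canonical t}"

lemma leaves_nonempty: "set (leaves t) \<noteq> {}"
  by (induction t) auto

lemma Node_in_ctrees:
  "Node l r \<in> ctrees K \<longleftrightarrow>
    (set (leaves l), set (leaves r)) \<in> canon_splittings K \<and> l \<in> ctrees (set (leaves l)) \<and> r \<in> ctrees (set (leaves r))"
  unfolding ctrees_def canon_splittings_def splittings_def
  using leaves_nonempty[of l] leaves_nonempty[of r] by auto

lemma Leaf_in_ctrees: "Leaf j \<in> ctrees K \<longleftrightarrow> K = {j}"
  unfolding ctrees_def by auto

lemma ctrees_singleton [simp]: "ctrees {a} = {Leaf a}"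
proof (intro equalityI subsetI)
  fix t assume "t \<in> ctrees {a}"
  thus "t \<in> {Leaf a}"
    by (cases t) (auto simp: Leaf_in_ctrees Node_in_ctrees)
qed (simp add: Leaf_in_ctrees)

lemma ctrees_not_leaf: "t \<in> ctrees K \<Longrightarrow> 2 \<le> card K \<Longrightarrow> \<not> is_leaf t"
  by (cases t) (auto simp: Leaf_in_ctrees)

lemma finite_ctrees: "finite K \<Longrightarrow> finite (ctrees K)"
proof (induction K rule: finite_psubset_induct)
  case (psubset K)
  have "ctrees K \<subseteq> Leaf ` K \<union> (\<lambda>(l, r). Node l r) ` (\<Union>p\<in>canon_splittings K. ctrees (fst p) \<times> ctrees (snd p))"
  proof
    fix t assume t: "t \<in> ctrees K"
    show "t \<in> Leaf ` K \<union> (\<lambda>(l, r). Node l r) ` (\<Union>p\<in>canon_splittings K. ctrees (fst p) \<times> ctrees (snd p))"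
    proof (cases t)
      case (Leaf j)
      thus ?thesis
        using t Leaf_in_ctrees by auto
    next
      case (Node l r)
      hence "(set (leaves l), set (leaves r)) \<in> canon_splittings K"
        "l \<in> ctrees (set (leaves l))" "r \<in> ctrees (set (leaves r))"
        using t Node_in_ctrees by auto
      hence "(l, r) \<in> (\<Union>p\<in>canon_splittings K. ctrees (fst p) \<times> ctrees (snd p))"
        by (intro UN_I[of "(set (leaves l), set (leaves r))"]) auto
      thus ?thesis
        by (intro UnI2 rev_image_eqI[of "(l, r)"]) (simp_all add: Node)
    qed
  qed
  moreover have "finite (\<Union>p\<in>canon_splittings K. ctrees (fst p) \<times> ctrees (snd p))"
  proof (rule finite_UN_I)
    show "finite (canon_splittings K)"
      by (rule finite_canon_splittings[OF psubset.hyps])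
    fix p assume "p \<in> canon_splittings K"
    thus "finite (ctrees (fst p) \<times> ctrees (snd p))"
      using psubset.IH[OF canon_splittings_psubset(1)] psubset.IH[OF canon_splittings_psubset(2)] by simp
  qed
  hence "finite (Leaf ` K \<union> (\<lambda>(l, r). Node l r) ` (\<Union>p\<in>canon_splittings K. ctrees (fst p) \<times> ctrees (snd p)))"
    using psubset.hyps by simp
  ultimately show ?case
    by (rule finite_subset)
qed

lemma bij_betw_Node_ctrees:
  assumes "2 \<le> card K"
  shows "bij_betw (\<lambda>z. Node (fst (snd z)) (snd (snd z)))
    (SIGMA p:canon_splittings K. ctrees (fst p) \<times> ctrees (snd p)) (ctrees K)"
    (is "bij_betw ?node ?Sig _")
  unfolding bij_betw_def
proof
  have leaves_Sig: "fst (fst z) = set (leaves (fst (snd z)))" "snd (fst z) = set (leaves (snd (snd z)))"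
    if "z \<in> ?Sig" for z
    using that by (auto simp: ctrees_def)
  show "inj_on ?node ?Sig"
  proof (rule inj_onI)
    fix z z' assume z: "z \<in> ?Sig" "z' \<in> ?Sig" "?node z = ?node z'"
    thus "z = z'"
      using leaves_Sig[OF z(1)] leaves_Sig[OF z(2)] by (simp add: prod_eq_iff)
  qed
  show "?node ` ?Sig = ctrees K"
  proof (intro equalityI subsetI)
    fix t assume "t \<in> ?node ` ?Sig"
    then obtain A B l r where "(A, B) \<in> canon_splittings K" "l \<in> ctrees A" "r \<in> ctrees B" "t = Node l r"
      by auto
    moreover from this have "set (leaves l) = A" "set (leaves r) = B"
      by (auto simp: ctrees_def)
    ultimately show "t \<in> ctrees K"
      by (simp add: Node_in_ctrees)
  next
    fix t assume t: "t \<in> ctrees K"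
    then obtain l r where lr: "t = Node l r"
      using ctrees_not_leaf[OF t assms] by (cases t) auto
    hence "((set (leaves l), set (leaves r)), (l, r)) \<in> ?Sig"
      using t Node_in_ctrees by auto
    thus "t \<in> ?node ` ?Sig"
      by (rule rev_image_eqI) (simp add: lr)
  qed
qed

lemma sum_ctrees:
  assumes "finite K" "2 \<le> card K"
  shows "sum f (ctrees K) = (\<Sum>p\<in>canon_splittings K. \<Sum>l\<in>ctrees (fst p). \<Sum>r\<in>ctrees (snd p). f (Node l r))"
proof -
  let ?Sig = "SIGMA p:canon_splittings K. ctrees (fst p) \<times> ctrees (snd p)"
  have fin: "\<forall>p\<in>canon_splittings K. finite (ctrees (fst p) \<times> ctrees (snd p))"
  proof
    fix p assume "p \<in> canon_splittings K"
    hence "fst p \<subseteq> K" "snd p \<subseteq> K"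
      using canon_splittings_psubset by blast+
    hence "finite (fst p)" "finite (snd p)"
      using assms(1) finite_subset by blast+
    thus "finite (ctrees (fst p) \<times> ctrees (snd p))"
      by (simp add: finite_ctrees)
  qed
  have "(\<Sum>p\<in>canon_splittings K. \<Sum>l\<in>ctrees (fst p). \<Sum>r\<in>ctrees (snd p). f (Node l r)) =
      (\<Sum>p\<in>canon_splittings K. \<Sum>lr\<in>ctrees (fst p) \<times> ctrees (snd p). f (Node (fst lr) (snd lr)))"
    by (rule sum.cong[OF refl]) (simp add: sum.cartesian_product case_prod_unfold)
  also have "\<dots> = (\<Sum>(p, lr)\<in>?Sig. f (Node (fst lr) (snd lr)))"
    by (rule sum.Sigma[OF finite_canon_splittings[OF assms(1)] fin])
  also have "\<dots> = (\<Sum>z\<in>?Sig. f (Node (fst (snd z)) (snd (snd z))))"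
    by (rule sum.cong[OF refl]) (simp add: case_prod_beta)
  also have "\<dots> = sum f (ctrees K)"
    by (rule sum.reindex_bij_betw[OF bij_betw_Node_ctrees[OF assms(2)]])
  finally show ?thesis ..
qed

definition inversions :: "(nat \<Rightarrow> int) \<Rightarrow> nat list \<Rightarrow> nat" where
  "inversions e w = card {(p, q). p < q \<and> q < length w \<and> w ! p > w ! q \<and> even (e (w ! p)) \<and> even (e (w ! q))}"

lemma inversions_Nil [simp]: "inversions e [] = 0"
  by (simp add: inversions_def)

lemma inversions_Cons:
  assumes "distinct (x # w)"
  shows "int (inversions e (x # w)) = crossings e {x} (set w) + int (inversions e w)"
proof -
  let ?I = "\<lambda>w. {(p, q). p < q \<and> q < length w \<and> w ! p > w ! q \<and> even (e (w ! p)) \<and> even (e (w ! q))}"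
  let ?Q = "{q. q < length w \<and> w ! q < x \<and> even (e x) \<and> even (e (w ! q))}"
  have I: "?I (x # w) = (\<lambda>q. (0, Suc q)) ` ?Q \<union> (\<lambda>(p, q). (Suc p, Suc q)) ` ?I w"
  proof (intro equalityI subsetI)
    fix pq assume pq: "pq \<in> ?I (x # w)"
    then obtain p q where pq_eq: "pq = (p, q)" and "p < q"
      by auto
    then obtain q' where q': "q = Suc q'"
      using not0_implies_Suc by force
    show "pq \<in> (\<lambda>q. (0, Suc q)) ` ?Q \<union> (\<lambda>(p, q). (Suc p, Suc q)) ` ?I w"
    proof (cases p)
      case 0
      thus ?thesis
        using pq unfolding pq_eq q' by auto
    next
      case (Suc p')
      hence "(p', q') \<in> ?I w"
        using pq unfolding pq_eq q' by auto
      thus ?thesis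
        unfolding pq_eq q' Suc by (intro UnI2 image_eqI[of _ _ "(p', q')"]) auto
    qed
  qed auto
  have fin_I: "finite (?I w)"
    by (rule finite_subset[of _ "{..<length w} \<times> {..<length w}"]) auto
  have "card (?I (x # w)) = card ?Q + card (?I w)"
    unfolding I by (subst card_Un_disjoint) (auto simp: card_image inj_on_def fin_I)
  moreover have "card ?Q = card {(a, b). a \<in> {x} \<and> b \<in> set w \<and> b < a \<and> even (e a) \<and> even (e b)}"
  proof (rule bij_betw_same_card[of "\<lambda>q. (x, w ! q)"])
    show "bij_betw (\<lambda>q. (x, w ! q)) ?Q {(a, b). a \<in> {x} \<and> b \<in> set w \<and> b < a \<and> even (e a) \<and> even (e b)}"
      using assms by (auto simp: bij_betw_def inj_on_def nth_eq_iff_index_eq image_iff in_set_conv_nth)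
  qed
  ultimately show ?thesis
    unfolding inversions_def crossings_def by simp
qed

lemma inversions_append:
  assumes "distinct (u @ v)"
  shows "int (inversions e (u @ v)) = int (inversions e u) + int (inversions e v) + crossings e (set u) (set v)"
  using assms
proof (induction u)
  case Nil
  thus ?case
    by (simp add: crossings_def)
next
  case (Cons x u)
  have "crossings e {x} (set u \<union> set v) = crossings e {x} (set u) + crossings e {x} (set v)"
    using Cons.prems by (intro crossings_Un_right) auto
  moreover have "crossings e ({x} \<union> set u) (set v) = crossings e {x} (set v) + crossings e (set u) (set v)"
    using Cons.prems by (intro crossings_Un_left) auto
  ultimately show ?case
    using Cons inversions_Cons[of x "u @ v" e] inversions_Cons[of x u e] by simp
qed

lemma inversions_singleton [simp]: "inversions e [a] = 0"
  using inversions_Cons[of a "[]" e] by (simp add: crossings_def)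

lemma tval_Node_fst:
  "fst (tval br h x e (Node l r)) =
    sgnv (if is_leaf l then snd (tval br h x e l) else snd (tval br h x e l) - 1)
      (br (if is_leaf l then fst (tval br h x e l) else h (fst (tval br h x e l)))
          (if is_leaf r then fst (tval br h x e r) else h (fst (tval br h x e r))))"
  by (simp add: Let_def case_prod_unfold)

lemma tval_Node_snd:
  "snd (tval br h x e (Node l r)) =
    (if is_leaf l then snd (tval br h x e l) else snd (tval br h x e l) - 1) +
    (if is_leaf r then snd (tval br h x e r) else snd (tval br h x e r) - 1)"
  by (simp add: Let_def case_prod_unfold)

lemma tval_degree:
  "distinct (leaves t) \<Longrightarrow>
    snd (tval br h x e t) = (if is_leaf t then tdeg e (set (leaves t)) else tdeg e (set (leaves t)) + 1)"
proof (induction t)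
  case (Leaf j)
  thus ?case by simp
next
  case (Node l r)
  hence "distinct (leaves l)" "distinct (leaves r)" "set (leaves l) \<inter> set (leaves r) = {}"
    by auto
  thus ?case
    using Node.IH tdeg_Un[of "set (leaves l)" "set (leaves r)" e] unfolding tval_Node_snd by simp
qed

section \<open>Tree sums and the minimal model bracket\<close>

context dgla_space
begin

definition tree_sum :: "('v \<Rightarrow> 'v) \<Rightarrow> (nat \<Rightarrow> 'v) \<Rightarrow> (nat \<Rightarrow> int) \<Rightarrow> nat set \<Rightarrow> 'v" where
  "tree_sum h x e K = (\<Sum>t\<in>ctrees K. sgnv (int (inversions e (leaves t))) (fst (tval br h x e t)))"

definition tree_family :: "('v \<Rightarrow> 'v) \<Rightarrow> (nat \<Rightarrow> 'v) \<Rightarrow> (nat \<Rightarrow> int) \<Rightarrow> nat set \<Rightarrow> 'v" where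
  "tree_family h x e K = (if card K = 1 then x (the_elem K) else h (tree_sum h x e K))"

lemma sum_ctrees_tree_family:
  assumes h: "module_hom s s h" and "finite A" "A \<noteq> {}"
  shows "(\<Sum>t\<in>ctrees A. sgnv (int (inversions e (leaves t)))
      (if is_leaf t then fst (tval br h x e t) else h (fst (tval br h x e t)))) = tree_family h x e A"
proof (cases "card A = 1")
  case True
  then obtain a where "A = {a}"
    by (rule card_1_singletonE)
  thus ?thesis
    by (simp add: tree_family_def)
next
  case False
  moreover have "card A \<noteq> 0"
    using assms(2,3) by simp
  ultimately have "2 \<le> card A"
    by linarith
  hence "(\<Sum>t\<in>ctrees A. sgnv (int (inversions e (leaves t)))
      (if is_leaf t then fst (tval br h x e t) else h (fst (tval br h x e t)))) =
      (\<Sum>t\<in>ctrees A. h (sgnv (int (inversions e (leaves t))) (fst (tval br h x e t))))"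
    using ctrees_not_leaf by (intro sum.cong) (auto simp: module_hom_sgnv[OF h])
  also have "\<dots> = tree_family h x e A"
    using False unfolding tree_family_def tree_sum_def module_hom.sum[OF h] by simp
  finally show ?thesis .
qed

text \<open>Cutting a tree at its root: the two subtrees are decorated trees of the blocks of a
  splitting, and the Koszul sign of the tree splits into the signs of the subtrees and the
  crossings between the blocks.\<close>

lemma tree_sum_eq_mc_sum:
  assumes h: "module_hom s s h" and K: "finite K" "2 \<le> card K"
  shows "tree_sum h x e K = mc_sum br e (tree_family h x e) K"
proof -
  define Hv where "Hv t = (if is_leaf t then fst (tval br h x e t) else h (fst (tval br h x e t)))" for t
  define sHv where "sHv t = sgnv (int (inversions e (leaves t))) (Hv t)" for t
  have "tree_sum h x e K = (\<Sum>p\<in>canon_splittings K. \<Sum>l\<in>ctrees (fst p). \<Sum>r\<in>ctrees (snd p).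
      sgnv (int (inversions e (leaves (Node l r)))) (fst (tval br h x e (Node l r))))"
    unfolding tree_sum_def by (rule sum_ctrees[OF K])
  also have "\<dots> = (\<Sum>p\<in>canon_splittings K. \<Sum>l\<in>ctrees (fst p). \<Sum>r\<in>ctrees (snd p).
      kbr br e (fst p) (snd p) (sHv l) (sHv r))"
  proof (intro sum.cong[OF refl])
    fix p l r assume p: "p \<in> canon_splittings K" and l: "l \<in> ctrees (fst p)" and r: "r \<in> ctrees (snd p)"
    have leaves: "set (leaves l) = fst p" "distinct (leaves l)" "set (leaves r) = snd p" "distinct (leaves r)"
      using l r unfolding ctrees_def by auto
    moreover have "fst p \<inter> snd p = {}"
      using p by (auto simp: canon_splittings_def splittings_def)
    ultimately have "int (inversions e (leaves (Node l r))) =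
        int (inversions e (leaves l)) + int (inversions e (leaves r)) + crossings e (fst p) (snd p)"
      using inversions_append[of "leaves l" "leaves r" e] by simp
    moreover have "(if is_leaf l then snd (tval br h x e l) else snd (tval br h x e l) - 1) = tdeg e (fst p)"
      using tval_degree[OF leaves(2), of br h x e] leaves(1) by simp
    ultimately show "sgnv (int (inversions e (leaves (Node l r)))) (fst (tval br h x e (Node l r))) =
        kbr br e (fst p) (snd p) (sHv l) (sHv r)"
      unfolding tval_Node_fst kbr_def sHv_def Hv_def br_sgnv_left br_sgnv_right
      by (simp add: sgnv_add_exp[symmetric] algebra_simps)
  qed
  also have "\<dots> = (\<Sum>p\<in>canon_splittings K. kbr br e (fst p) (snd p)
      (\<Sum>l\<in>ctrees (fst p). sHv l) (\<Sum>r\<in>ctrees (snd p). sHv r))"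
    unfolding kbr_def br_sum_sum sgnv_sum ..
  also have "\<dots> = mc_sum br e (tree_family h x e) K"
    unfolding mc_sum_def
  proof (rule sum.cong[OF refl])
    fix p assume "p \<in> canon_splittings K"
    hence "fst p \<subseteq> K" "snd p \<subseteq> K" "fst p \<noteq> {}" "snd p \<noteq> {}"
      by (auto simp: canon_splittings_def splittings_def)
    hence "finite (fst p)" "finite (snd p)" "fst p \<noteq> {}" "snd p \<noteq> {}"
      using K(1) finite_subset by blast+
    thus "kbr br e (fst p) (snd p) (\<Sum>l\<in>ctrees (fst p). sHv l) (\<Sum>r\<in>ctrees (snd p). sHv r) =
        kbr br e (fst p) (snd p) (tree_family h x e (fst p)) (tree_family h x e (snd p))"
      unfolding sHv_def Hv_def by (simp add: sum_ctrees_tree_family[OF h])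
  qed
  finally show ?thesis .
qed

lemma mm_bracket_rep_eq_mc_sum:
  assumes h: "module_hom s s h" and n: "2 \<le> n"
  shows "mm_bracket_rep br d h n z e =
    proj_pi d h (sgnv (tail_exp n e) (mc_sum br e (tree_family h (\<lambda>j. proj_pi d h (z j)) e) {1..n}))"
proof -
  have "trees n = ctrees {1..n}"
    unfolding trees_def planar_trees_def ctrees_def by auto
  hence "(\<Sum>t\<in>trees n. m_tree br d h n z e t) = sgnv (tail_exp n e) (tree_sum h (\<lambda>j. proj_pi d h (z j)) e {1..n})"
    unfolding tree_sum_def sgnv_sum m_tree_def koszul_exp_def inversions_def Let_def
    by (simp add: sgnv_add_exp add.commute)
  thus ?thesis
    unfolding mm_bracket_rep_def using tree_sum_eq_mc_sum[OF h, of "{1..n}"] n by simp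
qed

lemma proj_pi_cycle_homologous:
  assumes "module_hom s s h" "d c = 0"
  shows "proj_pi d h c - c \<in> range d"
proof -
  have "proj_pi d h c - c = d (- h c)"
    using assms by (simp add: proj_pi_def d_uminus module_hom.zero)
  thus ?thesis
    by blast
qed

end

lemma mc_homotopyD:
  assumes "mc_homotopy s Gd Gm d h"
  shows "module_hom s s h" "x \<in> Gd a \<Longrightarrow> h x \<in> Gd (a - 1)" "x \<in> Gm k \<Longrightarrow> h x \<in> Gm k"
  using assms by (simp_all add: mc_homotopy_def linear_iff_module_hom)

context momentum_dgla
begin

lemma homotopy_inverts_boundary:
  assumes h: "mc_homotopy s Gd Gm d h" "\<forall>x. d (h (d x)) = d x"
    and c: "c \<in> Gd a" "c \<in> Gm k" "c \<in> d ` Gm k"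
  shows "h c \<in> Gd (a - 1)" "h c \<in> Gm k" "d (h c) = c"
  using mc_homotopyD[OF h(1)] c h(2) by auto

lemma homotopy_graded_preimage:
  assumes "mc_homotopy s Gd Gm d h" "\<forall>x. d (h (d x)) = d x"
    and "c \<in> Gd a" "c \<in> Gm k" "c \<in> d ` Gm k"
  shows "\<exists>v. v \<in> Gd (a - 1) \<and> v \<in> Gm k \<and> d v = c"
  using homotopy_inverts_boundary[OF assms] by blast

lemma mc_solution_mc_sum_cycle:
  assumes "finite N" "mc_solution N e kk z H"
  shows "d (mc_sum br e H N) = 0"
  using assms by (intro d_mc_sum_eq_zero) (auto simp: mc_solution_def)

lemma tree_family_mc_solution:
  assumes N: "finite N" and h: "mc_homotopy s Gd Gm d h" "\<forall>x. d (h (d x)) = d x"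
    and z: "\<And>j. j \<in> N \<Longrightarrow> z j \<in> Gd (e j) \<and> z j \<in> Gm (kk j) \<and> d (z j) = 0"
    and acyclic: "\<And>J w. J \<subseteq> N \<Longrightarrow> 1 < card J \<Longrightarrow> card J < card N \<Longrightarrow>
      w \<in> Gm (momentum kk J) \<Longrightarrow> d w = 0 \<Longrightarrow> w \<in> d ` Gm (momentum kk J)"
  shows "mc_solution N e kk z (tree_family h (\<lambda>j. proj_pi d h (z j)) e)"
proof -
  define H where "H = tree_family h (\<lambda>j. proj_pi d h (z j)) e"
  note hD = mc_homotopyD[OF h(1)]
  have singleton: "H {j} = z j - d (h (z j))" "h (z j) \<in> Gd (e j - 1)" "h (z j) \<in> Gm (kk j)"
    if "j \<in> N" for j
    using z[OF that] hD by (simp_all add: H_def tree_family_def proj_pi_def module_hom.zero)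
  have "H A \<in> Gd (tdeg e A) \<and> H A \<in> Gm (momentum kk A) \<and> d (H A) = mc_sum br e H A"
    if "A \<subseteq> N" "A \<noteq> {}" "A \<noteq> N" for A
    using finite_subset[OF that(1) N] that
  proof (induction A rule: finite_psubset_induct)
    case (psubset A)
    have IH: "H B \<in> Gd (tdeg e B) \<and> H B \<in> Gm (momentum kk B) \<and> d (H B) = mc_sum br e H B"
      if "B \<subseteq> A" "B \<noteq> {}" "B \<noteq> A" for B
      using psubset.IH[of B] psubset.prems that by auto
    show ?case
    proof (cases "card A = 1")
      case True
      then obtain j where A: "A = {j}"
        by (rule card_1_singletonE)
      hence "j \<in> N"
        using psubset.prems(1) by simp
      thus ?thesis
        using singleton z Gd_d[of "h (z j)" "e j - 1"] Gm_d[of "h (z j)" "kk j"]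
        by (simp add: A Gd_diff Gm_diff d_diff)
    next
      case False
      have "card A \<noteq> 0" "A \<subset> N"
        using psubset.hyps psubset.prems by auto
      hence card_A: "1 < card A" "card A < card N"
        using False psubset_card_mono[OF N, of A] by auto
      have fam: "graded_family e H A" "momentum_family kk H A"
        using IH unfolding graded_family_def momentum_family_def by blast+
      have "H A = h (mc_sum br e H A)"
        using False tree_sum_eq_mc_sum[OF hD(1) psubset.hyps] card_A unfolding H_def
        by (simp add: tree_family_def)
      moreover have Y: "mc_sum br e H A \<in> Gd (tdeg e A + 1)" "mc_sum br e H A \<in> Gm (momentum kk A)"
        using mc_sum_in_Gd[OF psubset.hyps fam(1)] mc_sum_in_Gm[OF psubset.hyps fam(2)] .
      moreover have "d (mc_sum br e H A) = 0"
        using d_mc_sum_eq_zero[OF psubset.hyps fam(1)] IH by blast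
      hence "mc_sum br e H A \<in> d ` Gm (momentum kk A)"
        using acyclic[OF psubset.prems(1) card_A Y(2)] by blast
      ultimately show ?thesis
        using homotopy_inverts_boundary[OF h Y] by simp
    qed
  qed
  moreover have "\<exists>u. u \<in> Gd (e j - 1) \<and> u \<in> Gm (kk j) \<and> H {j} = z j - d u" if "j \<in> N" for j
    using singleton[OF that] by blast
  ultimately show ?thesis
    unfolding mc_solution_def graded_family_def momentum_family_def H_def[symmetric] by blast
qed

lemma mm_bracket_rep_homologous_mc_sum:
  assumes "module_hom s s h" "2 \<le> n" "mc_solution {1..n} e kk z (tree_family h (\<lambda>j. proj_pi d h (z j)) e)"
  shows "mm_bracket_rep br d h n z e -
    sgnv (tail_exp n e) (mc_sum br e (tree_family h (\<lambda>j. proj_pi d h (z j)) e) {1..n}) \<in> range d"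
  using proj_pi_cycle_homologous[OF assms(1)] mm_bracket_rep_eq_mc_sum[OF assms(1,2)]
    mc_solution_mc_sum_cycle[OF _ assms(3)] by (simp add: d_sgnv)

end

theorem mainTheorem1:
  fixes s :: "complex \<Rightarrow> 'v::ab_group_add \<Rightarrow> 'v"
    and Gd :: "int \<Rightarrow> 'v set" and Gm :: "'k::ab_group_add \<Rightarrow> 'v set"
    and br :: "'v \<Rightarrow> 'v \<Rightarrow> 'v" and d :: "'v \<Rightarrow> 'v"
    and n :: nat and kk :: "nat \<Rightarrow> 'k"
    and h h' :: "'v \<Rightarrow> 'v"
    and z :: "nat \<Rightarrow> 'v" and e :: "nat \<Rightarrow> int"
  assumes "dgla s Gd br d"
    and "momentum_grading s Gd br d Gm"
    and "n \<ge> 2"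
    and "\<forall>J. J \<subseteq> {1..n} \<and> 1 < card J \<and> card J < n \<longrightarrow>
           (\<forall>w \<in> Gm (\<Sum>i\<in>J. kk i). d w = 0 \<longrightarrow> w \<in> d ` Gm (\<Sum>i\<in>J. kk i))"
    and "mc_homotopy s Gd Gm d h" and "\<forall>x. d (h (d x)) = d x"
    and "mc_homotopy s Gd Gm d h'" and "\<forall>x. d (h' (d x)) = d x"
    and "\<forall>j\<in>{1..n}. z j \<in> Gd (e j) \<and> z j \<in> Gm (kk j) \<and> d (z j) = 0"
  shows "mm_bracket_rep br d h n z e - mm_bracket_rep br d h' n z e \<in> range d"
proof -
  interpret momentum_dgla s Gd br d Gm
    using assms(1,2) by unfold_locales
  let ?N = "{1..n}" and ?t = "tail_exp n e"
  let ?H = "tree_family h (\<lambda>j. proj_pi d h (z j)) e" and ?H' = "tree_family h' (\<lambda>j. proj_pi d h' (z j)) e"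
  have acyclic: "\<And>J w. J \<subseteq> ?N \<Longrightarrow> 1 < card J \<Longrightarrow> card J < card ?N \<Longrightarrow>
      w \<in> Gm (momentum kk J) \<Longrightarrow> d w = 0 \<Longrightarrow> w \<in> d ` Gm (momentum kk J)"
    using assms(4) unfolding momentum_def by simp
  have sol: "mc_solution ?N e kk z ?H" "mc_solution ?N e kk z ?H'"
    using assms(9) by (intro tree_family_mc_solution acyclic assms(5-8); simp)+
  have "mc_sum br e ?H ?N - mc_sum br e ?H' ?N \<in> range d"
  proof (rule mc_solutions_mc_sum_homologous[OF _ sol])
    fix J c assume "J \<subseteq> ?N" "1 < card J" "card J < card ?N"
      "c \<in> Gd (tdeg e J)" "c \<in> Gm (momentum kk J)" "d c = 0"
    thus "\<exists>v. v \<in> Gd (tdeg e J - 1) \<and> v \<in> Gm (momentum kk J) \<and> d v = c"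
      by (intro homotopy_graded_preimage[OF assms(5,6)] acyclic)
  qed simp
  hence "sgnv ?t (mc_sum br e ?H ?N) - sgnv ?t (mc_sum br e ?H' ?N) \<in> range d"
    by (rule range_d_diff_sgnv)
  moreover have "mm_bracket_rep br d h n z e - sgnv ?t (mc_sum br e ?H ?N) \<in> range d"
    by (rule mm_bracket_rep_homologous_mc_sum[OF mc_homotopyD(1)[OF assms(5)] assms(3) sol(1)])
  moreover have "mm_bracket_rep br d h' n z e - sgnv ?t (mc_sum br e ?H' ?N) \<in> range d"
    by (rule mm_bracket_rep_homologous_mc_sum[OF mc_homotopyD(1)[OF assms(7)] assms(3) sol(2)])
  ultimately show ?thesis
    by (metis range_d_diff_trans range_d_diff_sym)
qed

end
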